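(* Algorithm 1 (point-oriented Pareto computation) terminates for any $\varepsilon\geq 0$. Throughout the execution of Algorithm 1, the following properties hold: (i) $\mathbf{t}_{\uparrow}\in \mathscr{C}$. (ii) If $\mathbf{t}\in \mathscr{C}$ then $\mathbf{t}_{\downarrow} = \mathbf{t}$. (iii) $\|\mathbf{t}-\mathbf{t}_{\downarrow}\|\leq \min_{\mathbf{u}\in\mathscr{C}}\|\mathbf{t} -\mathbf{u}\|\leq \|\mathbf{t}-\mathbf{t}_{\uparrow}\|$.
   Context: Setting: agents $I$ and tasks $J$ with $|I|=|J|=n$; each agent $i$ is an MDP $\mathcal{M}_i$ with cost reward structure $\rho_i$, each task $j$ is a DFA $\mathcal{A}_j$ (accepting locations are sinks), and $\mathcal{M}_{i\otimes j}=\mathcal{M}_i[\rho_i]\otimes\mathcal{A}_j$ is the agent-task product MDP with atomic proposition $\mathtt{done}_j$ marking that the task has ended (accepted or trapped). For each $j$, $\rho_{j+n}$ is the reward giving a one-off unit reward when an accepting location is about to be entered for the first time. All $\mathcal{M}_{i\otimes j}[\rho_i]$ are assumed reward-finite w.r.t. reaching $\mathtt{done}_j$. Let $\mathscr{C}_0$ be the set of vectors $(\mathbf{E}^{\mathcal{M}^{\mathsf{ct}}[\rho_k],\mu})_{1\le k\le 2n}$ of expected rewards (until $\mathtt{done}$) over all schedulers $\mu$ of the centralised MDP $\mathcal{M}^{\mathsf{ct}}$ that combines all agent-task MDPs with randomised task assignment; $\mathscr{C}$ is the downward closure of $\mathscr{C}_0$, i.e. the set of feasible cost/probability threshold vectors.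 The norm is $\|\mathbf{v}\|^2=\mathbf{v}^T\mathbf{M}\mathbf{v}$ for a symmetric positive-definite matrix $\mathbf{M}$; $\|\cdot\|_1$ is the 1-norm; $\mathrm{down}(\Phi)$ is the downward closure of the convex hull of $\Phi$; $\mathbf{w}\cdot\boldsymbol{\rho}$ is the weighted combination of the reward structures $\rho_1,\dots,\rho_{2n}$. Algorithm 1, given a threshold vector $\mathbf{t}\in\mathbb{R}^{2n}$ (costs then probabilities) and $\varepsilon\ge 0$: initialise $\mathbf{t}_{\uparrow}:=-\boldsymbol{\infty}$, $\mathbf{t}_{\downarrow}:=\mathbf{t}$, $\Phi:=\emptyset$, $\Lambda:=\emptyset$, $\mathbf{w}:=(1,0,\ldots,0)$. While $\|\mathbf{t}_{\downarrow}-\mathbf{t}_{\uparrow}\|>\varepsilon$: if $\Phi\ne\emptyset$, set $\mathbf{t}_{\uparrow}$ to the point $\mathbf{x}\in\mathrm{down}(\Phi)$ minimising $\|\mathbf{t}-\mathbf{x}\|$ and $\mathbf{w}:=\mathbf{M}(\mathbf{t}-\mathbf{t}_{\uparrow})/\|\mathbf{M}(\mathbf{t}-\mathbf{t}_{\uparrow})\|_1$; compute $\mathbf{r}$ by Algorithm 2 (below); add $\mathbf{r}$ to $\Phi$ and $(\mathbf{w},\mathbf{r})$ to $\Lambda$; if $\mathbf{w}\cdot\mathbf{r}<\mathbf{w}\cdot\mathbf{t}_{\downarrow}$, set $\mathbf{t}_{\downarrow}$ to the $\mathbf{z}$ minimising $\|\mathbf{t}-\mathbf{z}\|$ subject to $\mathbf{w}'\cdot\mathbf{r}'\ge\mathbf{w}'\cdot\mathbf{z}$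 for all $(\mathbf{w}',\mathbf{r}')\in\Lambda$. Algorithm 2, given $\mathbf{w}$: for each $(i,j)$ compute a scheduler $\mu_{i,j}$ maximising $\mathbf{E}^{\mathcal{M}_{i\otimes j}[\mathbf{w}\cdot\boldsymbol{\rho}],\mu}$ and its value $c_{i,j}$; find a bijective assignment $f:J\to I$ maximising $\sum_j c_{f(j),j}$; for each $j$ set $r_{j+n}:=\mathbf{E}^{\mathcal{M}_{f(j)\otimes j}[\rho_{j+n}],\mu_{f(j),j}}$ and $r_{f(j)}:=\mathbf{E}^{\mathcal{M}_{f(j)\otimes j}[\rho_{f(j)}],\mu_{f(j),j}}$; return $\mathbf{r}=(r_k)_{k=1}^{2n}$. *)

theory Defs
  imports "HOL-Probability.Probability"
begin

record ('s,'a) mdp =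
  m_states :: "'s set"
  m_init   :: "'s"
  m_act    :: "'s \<Rightarrow> 'a set"
  m_trans  :: "'s \<Rightarrow> 'a \<Rightarrow> 's pmf"

definition wf_mdp :: "('s,'a) mdp \<Rightarrow> bool" where
  "wf_mdp M \<longleftrightarrow> finite (m_states M) \<and> m_init M \<in> m_states M \<and>
     (\<forall>s\<in>m_states M. m_act M s \<noteq> {} \<and> finite (m_act M s) \<and>
        (\<forall>a\<in>m_act M s. set_pmf (m_trans M s a) \<subseteq> m_states M))"

text \<open>A history is the initial state followed by the (action, successor) steps taken so far.\<close>
type_synonym ('s,'a) hist = "'s \<times> ('a \<times> 's) list"
type_synonym ('s,'a) sched = "('s,'a) hist \<Rightarrow> 'a pmf"

definition cur :: "('s,'a) hist \<Rightarrow> 's" where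
  "cur h = (if snd h = [] then fst h else snd (last (snd h)))"

definition valid_sched :: "('s,'a) mdp \<Rightarrow> ('s,'a) sched \<Rightarrow> bool" where
  "valid_sched M \<mu> \<longleftrightarrow> (\<forall>h. cur h \<in> m_states M \<longrightarrow> set_pmf (\<mu> h) \<subseteq> m_act M (cur h))"

definition memoryless_det :: "('s,'a) sched \<Rightarrow> bool" where
  "memoryless_det \<mu> \<longleftrightarrow> (\<exists>\<sigma>. \<forall>h. \<mu> h = return_pmf (\<sigma> (cur h)))"

primrec exp_rew_n :: "('s,'a) mdp \<Rightarrow> ('s \<Rightarrow> 'a \<Rightarrow> 's \<Rightarrow> real) \<Rightarrow> 's set \<Rightarrow>
    ('s,'a) sched \<Rightarrow> nat \<Rightarrow> ('s,'a) hist \<Rightarrow> real" where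
  "exp_rew_n M r T \<mu> 0 h = 0"
| "exp_rew_n M r T \<mu> (Suc n) h =
     (if cur h \<in> T then 0 else
       measure_pmf.expectation (\<mu> h) (\<lambda>a.
         measure_pmf.expectation (m_trans M (cur h) a) (\<lambda>s'.
           r (cur h) a s' + exp_rew_n M r T \<mu> n (fst h, snd h @ [(a, s')]))))"

definition exp_rew :: "('s,'a) mdp \<Rightarrow> ('s \<Rightarrow> 'a \<Rightarrow> 's \<Rightarrow> real) \<Rightarrow> 's set \<Rightarrow>
    ('s,'a) sched \<Rightarrow> real" where
  "exp_rew M r T \<mu> = lim (\<lambda>n. exp_rew_n M r T \<mu> n (m_init M, []))"

record ('q,'l) dfa =
  d_states :: "'q set"
  d_init   :: "'q"
  d_delta  :: "'q \<Rightarrow> 'l \<Rightarrow> 'q"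
  d_acc    :: "'q set"

definition wf_dfa :: "('q,'l) dfa \<Rightarrow> bool" where
  "wf_dfa D \<longleftrightarrow> finite (d_states D) \<and> d_init D \<in> d_states D \<and>
     (\<forall>q\<in>d_states D. \<forall>l. d_delta D q l \<in> d_states D) \<and> d_acc D \<subseteq> d_states D \<and>
     (\<forall>q\<in>d_acc D. \<forall>l. d_delta D q l = q)"

definition trapped :: "('q,'l) dfa \<Rightarrow> 'q \<Rightarrow> bool" where
  "trapped D q \<longleftrightarrow> \<not> (\<exists>w. foldl (d_delta D) q w \<in> d_acc D)"

definition prod_mdp :: "('s,'a) mdp \<Rightarrow> ('s \<Rightarrow> 'l) \<Rightarrow> ('q,'l) dfa \<Rightarrow> ('s \<times> 'q, 'a) mdp" where
  "prod_mdp M lab D = \<lparr> m_states = m_states M \<times> d_states D,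
      m_init = (m_init M, d_init D),
      m_act = (\<lambda>(s,q). m_act M s),
      m_trans = (\<lambda>(s,q) a. map_pmf (\<lambda>s'. (s', d_delta D q (lab s'))) (m_trans M s a)) \<rparr>"

section \<open>The multi-agent instance: agents and tasks both indexed by the finite type 'n\<close>

record ('n,'s,'a,'q,'l) inst =
  ag   :: "'n \<Rightarrow> ('s,'a) mdp"
  lab  :: "'n \<Rightarrow> 's \<Rightarrow> 'l"
  cost :: "'n \<Rightarrow> 's \<Rightarrow> 'a \<Rightarrow> real"
  task :: "'n \<Rightarrow> ('q,'l) dfa"

definition pmdp :: "('n,'s,'a,'q,'l) inst \<Rightarrow> 'n \<Rightarrow> 'n \<Rightarrow> ('s \<times> 'q, 'a) mdp" where
  "pmdp X i j = prod_mdp (ag X i) (lab X i) (task X j)"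

definition pdone :: "('n,'s,'a,'q,'l) inst \<Rightarrow> 'n \<Rightarrow> ('s \<times> 'q) set" where
  "pdone X j = {(s,q). q \<in> d_acc (task X j) \<or> trapped (task X j) q}"

text \<open>Reward structures rho_k on M_{i x j}, indexed by k :: 'n + 'n:
  Inl i' = cost of agent i' (rho_1..rho_n), Inr j' = acceptance reward of task j'
  (rho_{n+1}..rho_{2n}).\<close>
definition prew :: "('n,'s,'a,'q,'l) inst \<Rightarrow> 'n \<Rightarrow> 'n \<Rightarrow> 'n + 'n \<Rightarrow>
    ('s \<times> 'q) \<Rightarrow> 'a \<Rightarrow> ('s \<times> 'q) \<Rightarrow> real" where
  "prew X i j k x a y = (case k of
      Inl i' \<Rightarrow> (if i' = i then cost X i (fst x) a else 0)
    | Inr j' \<Rightarrow> (if j' = j \<and> snd x \<notin> d_acc (task X j) \<and> snd y \<in> d_acc (task X j)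
                 then 1 else 0))"

definition pval :: "('n,'s,'a,'q,'l) inst \<Rightarrow> 'n \<Rightarrow> 'n \<Rightarrow> ('s \<times> 'q, 'a) sched \<Rightarrow> 'n + 'n \<Rightarrow> real" where
  "pval X i j \<mu> k = exp_rew (pmdp X i j) (prew X i j k) (pdone X j) \<mu>"

definition wval :: "('n::finite,'s,'a,'q,'l) inst \<Rightarrow> 'n \<Rightarrow> 'n \<Rightarrow> real^('n+'n) \<Rightarrow>
    ('s \<times> 'q, 'a) sched \<Rightarrow> real" where
  "wval X i j w \<mu> = exp_rew (pmdp X i j)
      (\<lambda>x a y. \<Sum>k\<in>UNIV. w $ k * prew X i j k x a y) (pdone X j) \<mu>"

text \<open>Achievable vectors of the centralised MDP: a random bijective assignment
  f : tasks -> agents, then for each pair a scheduler of the agent-task product.\<close>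
definition C0 :: "('n::finite,'s,'a,'q,'l) inst \<Rightarrow> (real^('n+'n)) set" where
  "C0 X = {(\<chi> k. measure_pmf.expectation p (\<lambda>f. case k of
              Inl i \<Rightarrow> pval X i (inv f i) (\<sigma> f i (inv f i)) (Inl i)
            | Inr j \<Rightarrow> pval X (f j) j (\<sigma> f (f j) j) (Inr j))) |
      p \<sigma>. (\<forall>f\<in>set_pmf p. bij f) \<and> (\<forall>f i j. valid_sched (pmdp X i j) (\<sigma> f i j))}"

definition Cset :: "('n::finite,'s,'a,'q,'l) inst \<Rightarrow> (real^('n+'n)) set" where
  "Cset X = {u. \<exists>x\<in>C0 X. \<forall>k. u $ k \<le> x $ k}"

definition alg2 :: "('n::finite,'s,'a,'q,'l) inst \<Rightarrow> real^('n+'n) \<Rightarrow> (real^('n+'n)) set" where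
  "alg2 X w = {r. \<exists>\<mu> f.
      (\<forall>i j. valid_sched (pmdp X i j) (\<mu> i j) \<and> memoryless_det (\<mu> i j) \<and>
         (\<forall>\<mu>'. valid_sched (pmdp X i j) \<mu>' \<longrightarrow> wval X i j w \<mu>' \<le> wval X i j w (\<mu> i j))) \<and>
      bij f \<and>
      (\<forall>g. bij g \<longrightarrow> (\<Sum>j\<in>UNIV. wval X (g j) j w (\<mu> (g j) j))
                     \<le> (\<Sum>j\<in>UNIV. wval X (f j) j w (\<mu> (f j) j))) \<and>
      r = (\<chi> k. case k of
              Inl i \<Rightarrow> pval X i (inv f i) (\<mu> i (inv f i)) (Inl i)
            | Inr j \<Rightarrow> pval X (f j) j (\<mu> (f j) j) (Inr j))}"

definition normM :: "real^'k^'k \<Rightarrow> real^'k \<Rightarrow> real" where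
  "normM Mm v = sqrt (v \<bullet> (Mm *v v))"

definition norm1 :: "real^'k \<Rightarrow> real" where
  "norm1 v = (\<Sum>k\<in>UNIV. \<bar>v $ k\<bar>)"

definition downc :: "(real^'k) set \<Rightarrow> (real^'k) set" where
  "downc \<Phi> = {u. \<exists>x\<in>convex hull \<Phi>. \<forall>k. u $ k \<le> x $ k}"

text \<open>State of Algorithm 1; t_up = None encodes the initial value -infinity.\<close>
record ('k::finite) astate =
  tup   :: "(real^'k) option"
  tdown :: "real^'k"
  phi   :: "(real^'k) set"
  lam   :: "((real^'k) \<times> (real^'k)) set"
  wt    :: "real^'k"

definition alg1_init :: "'n::finite \<Rightarrow> real^('n+'n) \<Rightarrow> ('n+'n) astate" where
  "alg1_init i0 t = \<lparr> tup = None, tdown = t, phi = {}, lam = {},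
      wt = (\<chi> k. if k = Inl i0 then 1 else 0) \<rparr>"

definition alg1_guard :: "real^'k^'k \<Rightarrow> real \<Rightarrow> 'k astate \<Rightarrow> bool" where
  "alg1_guard Mm eps S = (case tup S of None \<Rightarrow> True
                          | Some u \<Rightarrow> normM Mm (tdown S - u) > eps)"

text \<open>One iteration of the while loop (nondeterministic in the choices made by Algorithm 2).\<close>
definition alg1_step :: "('n::finite,'s,'a,'q,'l) inst \<Rightarrow> real^('n+'n)^('n+'n) \<Rightarrow> real^('n+'n)
    \<Rightarrow> real \<Rightarrow> ('n+'n) astate \<Rightarrow> ('n+'n) astate \<Rightarrow> bool" where
  "alg1_step X Mm t eps S S' \<longleftrightarrow> alg1_guard Mm eps S \<and>
    (\<exists>u w r z.
       (if phi S = {} then u = tup S \<and> w = wt S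
        else (\<exists>x. x \<in> downc (phi S) \<and>
                  (\<forall>y\<in>downc (phi S). normM Mm (t - x) \<le> normM Mm (t - y)) \<and>
                  u = Some x \<and>
                  w = (1 / norm1 (Mm *v (t - x))) *\<^sub>R (Mm *v (t - x)))) \<and>
       r \<in> alg2 X w \<and>
       (if w \<bullet> r < w \<bullet> tdown S
        then (\<forall>(w',r')\<in>insert (w,r) (lam S). w' \<bullet> z \<le> w' \<bullet> r') \<and>
             (\<forall>z'. (\<forall>(w',r')\<in>insert (w,r) (lam S). w' \<bullet> z' \<le> w' \<bullet> r') \<longrightarrow>
                   normM Mm (t - z) \<le> normM Mm (t - z'))
        else z = tdown S) \<and>
       S' = \<lparr> tup = u, tdown = z, phi = insert r (phi S), lam = insert (w,r) (lam S), wt = w \<rparr>)"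

end

theory Submission
  imports Defs
begin

(* Algorithm 2 is always applicable because every agent-task product MDP has an optimal
   memoryless deterministic (MD) scheduler for a weighted total reward: for a discount factor
   b < 1 value iteration yields one, there are only finitely many MD schedulers, so one of them is
   optimal for discount factors arbitrarily close to 1, and an Abelian argument carries its
   optimality over to the undiscounted total reward. The vector r returned for weights w >= 0
   therefore maximises w . x over C, which is convex by Kuhn's theorem on mixing schedulers, so
   every pair (w, r) yields a half-space containing C. Consequently t_up, lying in the downward
   closed convex hull of computed points, is in C, while t_down, the point of the intersection of
   the half-spaces nearest to t, is at least as close to t as any point of C.
   For termination: w is the normal at t_up of the nearest-point problem for down(Phi), so a
   point r already in Phi lies on the hyperplane through t_up; then the new t_down is t_up and the
   loop stops. Every other iteration adds one of the finitely many values of MD schedulers and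
   assignments to Phi. *)

section \<open>Finite-horizon expected rewards\<close>

lemma cur_Nil [simp]: "cur (x, []) = x"
  by (simp add: cur_def)

lemma cur_snoc [simp]: "cur (x, ys @ [p]) = snd p"
  by (simp add: cur_def)

lemma expectation_pmf_eq_sum:
  "finite A \<Longrightarrow> set_pmf p \<subseteq> A \<Longrightarrow> measure_pmf.expectation p f = (\<Sum>a\<in>A. pmf p a * f a)"
  by (subst integral_measure_pmf_real[of A]) (auto simp: mult.commute)

abbreviation (input) snoc_hist :: "('s,'a) hist \<Rightarrow> 'a \<Rightarrow> 's \<Rightarrow> ('s,'a) hist" where
  "snoc_hist h a s \<equiv> (fst h, snd h @ [(a, s)])"

locale finite_mdp =
  fixes M :: "('s,'a) mdp"
  assumes wf: "wf_mdp M"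
begin

abbreviation "St \<equiv> m_states M"
abbreviation "Act \<equiv> m_act M"
abbreviation "Tr \<equiv> m_trans M"

lemma finite_St [simp]: "finite St"
  using wf by (simp add: wf_mdp_def)

lemma init_in_St [simp]: "m_init M \<in> St"
  using wf by (simp add: wf_mdp_def)

lemma finite_Act [simp]: "s \<in> St \<Longrightarrow> finite (Act s)"
  using wf by (simp add: wf_mdp_def)

lemma Act_nonempty: "s \<in> St \<Longrightarrow> Act s \<noteq> {}"
  using wf by (simp add: wf_mdp_def)

lemma set_pmf_Tr: "s \<in> St \<Longrightarrow> a \<in> Act s \<Longrightarrow> set_pmf (Tr s a) \<subseteq> St"
  using wf by (simp add: wf_mdp_def)

lemma sum_pmf_Tr: "s \<in> St \<Longrightarrow> a \<in> Act s \<Longrightarrow> (\<Sum>s'\<in>St. pmf (Tr s a) s') = 1"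
  by (rule sum_pmf_eq_1) (auto dest: set_pmf_Tr)

lemma set_pmf_sched: "valid_sched M \<mu> \<Longrightarrow> cur h \<in> St \<Longrightarrow> set_pmf (\<mu> h) \<subseteq> Act (cur h)"
  unfolding valid_sched_def by blast

lemma sum_pmf_sched: "valid_sched M \<mu> \<Longrightarrow> cur h \<in> St \<Longrightarrow> (\<Sum>a\<in>Act (cur h). pmf (\<mu> h) a) = 1"
  by (rule sum_pmf_eq_1) (auto dest: set_pmf_sched)

definition step_expect :: "('s,'a) sched \<Rightarrow> ('s,'a) hist \<Rightarrow> ('a \<Rightarrow> 's \<Rightarrow> real) \<Rightarrow> real" where
  "step_expect \<mu> h g = (\<Sum>a\<in>Act (cur h). pmf (\<mu> h) a * (\<Sum>s\<in>St. pmf (Tr (cur h) a) s * g a s))"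

lemma step_expect_cong:
  "(\<And>a s. a \<in> Act (cur h) \<Longrightarrow> s \<in> St \<Longrightarrow> g a s = g' a s) \<Longrightarrow> step_expect \<mu> h g = step_expect \<mu> h g'"
  unfolding step_expect_def by (auto intro!: sum.cong)

lemma step_expect_mono:
  "(\<And>a s. a \<in> Act (cur h) \<Longrightarrow> s \<in> St \<Longrightarrow> g a s \<le> g' a s) \<Longrightarrow> step_expect \<mu> h g \<le> step_expect \<mu> h g'"
  unfolding step_expect_def by (auto intro!: sum_mono mult_left_mono)

lemma step_expect_add: "step_expect \<mu> h (\<lambda>a s. g a s + g' a s) = step_expect \<mu> h g + step_expect \<mu> h g'"
  by (simp add: step_expect_def distrib_left sum.distrib)

lemma step_expect_cmult: "step_expect \<mu> h (\<lambda>a s. c * g a s) = c * step_expect \<mu> h g"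
  by (simp add: step_expect_def sum_distrib_left mult.left_commute)

lemma step_expect_diff: "step_expect \<mu> h (\<lambda>a s. g a s - g' a s) = step_expect \<mu> h g - step_expect \<mu> h g'"
  using step_expect_add[of \<mu> h g "\<lambda>a s. - g' a s"] step_expect_cmult[of \<mu> h "-1" g'] by simp

lemma step_expect_sum: "step_expect \<mu> h (\<lambda>a s. \<Sum>k\<in>K. g k a s) = (\<Sum>k\<in>K. step_expect \<mu> h (g k))"
  unfolding step_expect_def by (simp add: sum_distrib_left sum.swap[of _ St K] sum.swap[of _ "Act (cur h)" K])

lemma step_expect_const: "valid_sched M \<mu> \<Longrightarrow> cur h \<in> St \<Longrightarrow> step_expect \<mu> h (\<lambda>a s. c) = c"
  unfolding step_expect_def
  by (simp add: sum_distrib_right[symmetric] sum_pmf_Tr sum_pmf_sched cong: sum.cong)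

lemma step_expect_nonneg:
  "valid_sched M \<mu> \<Longrightarrow> cur h \<in> St \<Longrightarrow> (\<And>a s. a \<in> Act (cur h) \<Longrightarrow> s \<in> St \<Longrightarrow> 0 \<le> g a s) \<Longrightarrow>
    0 \<le> step_expect \<mu> h g"
  using step_expect_mono[of h "\<lambda>a s. 0" g \<mu>] step_expect_const[of \<mu> h 0] by simp

lemma exp_rew_n_Suc:
  assumes "valid_sched M \<mu>" "cur h \<in> St"
  shows "exp_rew_n M r T \<mu> (Suc n) h =
    (if cur h \<in> T then 0
     else step_expect \<mu> h (\<lambda>a s'. r (cur h) a s' + exp_rew_n M r T \<mu> n (snoc_hist h a s')))"
proof -
  have "measure_pmf.expectation (Tr (cur h) a) g = (\<Sum>s\<in>St. pmf (Tr (cur h) a) s * g s)"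
    if "a \<in> Act (cur h)" for a g
    using that assms by (intro expectation_pmf_eq_sum set_pmf_Tr) auto
  then show ?thesis
    using assms set_pmf_sched[OF assms]
    by (simp add: step_expect_def expectation_pmf_eq_sum[of "Act (cur h)"] cong: sum.cong)
qed

lemma exp_rew_n_target: "cur h \<in> T \<Longrightarrow> exp_rew_n M r T \<mu> n h = 0"
  by (cases n) auto

lemma exp_rew_n_lincomb:
  assumes "valid_sched M \<mu>" "cur h \<in> St"
  shows "exp_rew_n M (\<lambda>x a y. \<Sum>k\<in>K. c k * rr k x a y) T \<mu> n h = (\<Sum>k\<in>K. c k * exp_rew_n M (rr k) T \<mu> n h)"
  using assms(2)
proof (induction n arbitrary: h)
  case (Suc n)
  show ?case
  proof (cases "cur h \<in> T")
    case False
    have "step_expect \<mu> h (\<lambda>a s'. (\<Sum>k\<in>K. c k * rr k (cur h) a s') +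
            exp_rew_n M (\<lambda>x a y. \<Sum>k\<in>K. c k * rr k x a y) T \<mu> n (snoc_hist h a s'))
        = step_expect \<mu> h (\<lambda>a s'. \<Sum>k\<in>K. c k * (rr k (cur h) a s' + exp_rew_n M (rr k) T \<mu> n (snoc_hist h a s')))"
      by (rule step_expect_cong) (simp add: Suc.IH sum.distrib distrib_left)
    then show ?thesis
      using False
      by (simp add: exp_rew_n_Suc[OF assms(1) Suc.prems] step_expect_sum step_expect_cmult
          del: exp_rew_n.simps(2))
  qed (simp add: exp_rew_n_target)
qed simp

lemma exp_rew_n_zero_reward:
  assumes "valid_sched M \<mu>" "cur h \<in> St" "\<And>x a y. r x a y = 0"
  shows "exp_rew_n M r T \<mu> n h = 0"
proof -
  have "r = (\<lambda>x a y. \<Sum>k\<in>{}. 0 * r x a y)"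
    using assms(3) by (intro ext) simp
  then show ?thesis
    using exp_rew_n_lincomb[OF assms(1,2), where K = "{}"] by simp
qed

lemma exp_rew_n_nonneg_Suc_mono:
  assumes "valid_sched M \<mu>" "cur h \<in> St" "\<And>x a y. r x a y \<ge> 0"
  shows "0 \<le> exp_rew_n M r T \<mu> n h \<and> exp_rew_n M r T \<mu> n h \<le> exp_rew_n M r T \<mu> (Suc n) h"
  using assms(2)
proof (induction n arbitrary: h)
  case 0
  have "0 \<le> step_expect \<mu> h (\<lambda>a s'. r (cur h) a s' + exp_rew_n M r T \<mu> 0 (snoc_hist h a s'))"
    by (rule step_expect_nonneg[OF assms(1) 0]) (simp add: assms(3))
  then show ?case
    by (simp add: exp_rew_n_Suc[OF assms(1) 0] del: exp_rew_n.simps(2))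
next
  case (Suc n)
  show ?case
  proof (cases "cur h \<in> T")
    case False
    have "0 \<le> step_expect \<mu> h (\<lambda>a s'. r (cur h) a s' + exp_rew_n M r T \<mu> n (snoc_hist h a s'))"
      by (rule step_expect_nonneg[OF assms(1) Suc.prems]) (simp add: assms(3) Suc.IH add_nonneg_nonneg)
    moreover have "step_expect \<mu> h (\<lambda>a s'. r (cur h) a s' + exp_rew_n M r T \<mu> n (snoc_hist h a s'))
       \<le> step_expect \<mu> h (\<lambda>a s'. r (cur h) a s' + exp_rew_n M r T \<mu> (Suc n) (snoc_hist h a s'))"
      by (rule step_expect_mono) (simp del: exp_rew_n.simps add: Suc.IH)
    ultimately show ?thesis
      using False by (simp only: exp_rew_n_Suc[OF assms(1) Suc.prems] if_False; simp)
  qed (simp add: exp_rew_n_target)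
qed

lemma exp_rew_n_sched_cong:
  assumes "valid_sched M \<mu>" "valid_sched M \<mu>'" "\<And>h. cur h \<in> St \<Longrightarrow> \<mu> h = \<mu>' h" "cur h \<in> St"
  shows "exp_rew_n M r T \<mu> n h = exp_rew_n M r T \<mu>' n h"
  using assms(4)
proof (induction n arbitrary: h)
  case (Suc n)
  then show ?case
    using assms
    by (auto simp: exp_rew_n_Suc step_expect_def intro!: sum.cong dest: set_pmf_Tr
        simp del: exp_rew_n.simps(2))
qed simp

end

section \<open>An Abelian theorem\<close>

lemma nonpos_if_le_geometric:
  fixes x K b :: real
  assumes "\<And>n. x \<le> K * b ^ n" "0 \<le> b" "b < 1"
  shows "x \<le> 0"
proof -
  have "(\<lambda>n. K * b ^ n) \<longlonglongrightarrow> K * 0"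
    by (intro tendsto_mult tendsto_const LIMSEQ_power_zero) (use assms in auto)
  then show ?thesis
    using assms(1) by (intro LIMSEQ_le_const[of "\<lambda>n. K * b ^ n"]) auto
qed

lemma discounted_increments_diff_eq:
  fixes S :: "nat \<Rightarrow> real"
  assumes "S 0 = 0"
  shows "(\<Sum>k<n. b ^ k * (S (Suc k) - S k)) - L
    = (1 - b) * (\<Sum>k<n. b ^ k * (S (Suc k) - L)) + b ^ n * (S n - L)"
  by (induction n) (auto simp: assms algebra_simps)

lemma abs_discounted_sum_le:
  fixes a :: "nat \<Rightarrow> real" and b e B :: real and N :: nat
  assumes b: "0 \<le> b" "b \<le> 1" and tail: "\<And>k. k \<ge> N \<Longrightarrow> \<bar>a k\<bar> \<le> e" and bound: "\<And>k. \<bar>a k\<bar> \<le> B"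
    and e: "0 \<le> e"
  shows "\<bar>\<Sum>k<n. b ^ k * a k\<bar> \<le> e * (\<Sum>k<n. b ^ k) + N * B"
proof -
  have B: "0 \<le> B"
    using bound[of 0] by linarith
  have "b ^ k * \<bar>a k\<bar> \<le> b ^ k * e + (if k < N then B else 0)" for k
  proof (cases "k < N")
    case True
    have "b ^ k * \<bar>a k\<bar> \<le> \<bar>a k\<bar>"
      using b by (intro mult_left_le_one_le power_le_one) auto
    then show ?thesis
      using True bound[of k] b e by (simp add: add_increasing)
  qed (use tail b in \<open>simp add: mult_left_mono\<close>)
  then have "\<bar>\<Sum>k<n. b ^ k * a k\<bar> \<le> (\<Sum>k<n. b ^ k * e + (if k < N then B else 0))"
    by (intro order_trans[OF sum_abs] sum_mono) (use b in \<open>simp add: abs_mult\<close>)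
  also have "\<dots> = e * (\<Sum>k<n. b ^ k) + (\<Sum>k\<in>{..<n} \<inter> {..<N}. B)"
    by (simp add: sum.distrib sum_distrib_left mult.commute sum.If_cases Int_def)
  also have "(\<Sum>k\<in>{..<n} \<inter> {..<N}. B) \<le> N * B"
    using B card_mono[of "{..<N}" "{..<n} \<inter> {..<N}"] by (simp add: mult_right_mono)
  finally show ?thesis
    by simp
qed

lemma discounted_increments_approx:
  fixes S :: "nat \<Rightarrow> real"
  assumes S0: "S 0 = 0" and lim: "S \<longlonglongrightarrow> L" and e: "e > 0"
  shows "\<exists>K. \<forall>b n. 0 \<le> b \<longrightarrow> b < 1 \<longrightarrow>
      \<bar>(\<Sum>k<n. b ^ k * (S (Suc k) - S k)) - L\<bar> \<le> e + (1 - b) * K + b ^ n * K"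
proof -
  obtain N where N: "\<And>m. m \<ge> N \<Longrightarrow> \<bar>S m - L\<bar> < e"
    using LIMSEQ_D[OF lim e] by (auto simp: dist_real_def)
  have "convergent (\<lambda>m. S m - L)"
    using lim by (auto intro!: convergentI tendsto_diff)
  then obtain B where B: "\<And>m. \<bar>S m - L\<bar> \<le> B"
    using convergent_imp_Bseq BseqE by (metis real_norm_def)
  have B0: "0 \<le> B"
    using B[of 0] by linarith
  have "\<bar>(\<Sum>k<n. b ^ k * (S (Suc k) - S k)) - L\<bar> \<le> e + (1 - b) * (N * B + B) + b ^ n * (N * B + B)"
    if b: "0 \<le> b" "b < 1" for b n
  proof -
    have sum_bound: "\<bar>\<Sum>k<n. b ^ k * (S (Suc k) - L)\<bar> \<le> e * (\<Sum>k<n. b ^ k) + N * B"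
      by (rule abs_discounted_sum_le[where a = "\<lambda>k. S (Suc k) - L"])
         (use b N B e in \<open>auto simp: less_imp_le\<close>)
    have "\<bar>(\<Sum>k<n. b ^ k * (S (Suc k) - S k)) - L\<bar>
        \<le> (1 - b) * \<bar>\<Sum>k<n. b ^ k * (S (Suc k) - L)\<bar> + b ^ n * \<bar>S n - L\<bar>"
      unfolding discounted_increments_diff_eq[of S, OF S0] using b
      by (intro abs_triangle_ineq[THEN order_trans]) (simp add: abs_mult)
    also have "\<dots> \<le> (1 - b) * (e * (\<Sum>k<n. b ^ k) + N * B) + b ^ n * B"
      using b by (intro add_mono mult_left_mono sum_bound B) auto
    also have "\<dots> = e * (1 - b ^ n) + (1 - b) * (N * B) + b ^ n * B"
      by (simp add: one_diff_power_eq algebra_simps)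
    also have "\<dots> \<le> e + (1 - b) * (N * B + B) + b ^ n * (N * B + B)"
      using b e B0 by (intro add_mono mult_left_mono) auto
    finally show ?thesis .
  qed
  then show ?thesis
    by blast
qed

lemma limit_le_if_discounted_increments_le:
  fixes S1 S2 :: "nat \<Rightarrow> real"
  assumes S0: "S1 0 = 0" "S2 0 = 0" and lim: "S1 \<longlonglongrightarrow> L1" "S2 \<longlonglongrightarrow> L2"
    and disc_le: "\<And>B. B < 1 \<Longrightarrow> \<exists>b C. B \<le> b \<and> 0 \<le> b \<and> b < 1 \<and>
      (\<forall>n. (\<Sum>k<n. b ^ k * (S1 (Suc k) - S1 k)) \<le> (\<Sum>k<n. b ^ k * (S2 (Suc k) - S2 k)) + b ^ n * C)"
  shows "L1 \<le> L2"
proof (rule field_le_epsilon)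
  fix e :: real
  assume e: "0 < e"
  obtain K1 where K1: "\<And>b n. 0 \<le> b \<Longrightarrow> b < 1 \<Longrightarrow>
      \<bar>(\<Sum>k<n. b ^ k * (S1 (Suc k) - S1 k)) - L1\<bar> \<le> e / 3 + (1 - b) * K1 + b ^ n * K1"
    using discounted_increments_approx[OF S0(1) lim(1), of "e / 3"] e by auto
  obtain K2 where K2: "\<And>b n. 0 \<le> b \<Longrightarrow> b < 1 \<Longrightarrow>
      \<bar>(\<Sum>k<n. b ^ k * (S2 (Suc k) - S2 k)) - L2\<bar> \<le> e / 3 + (1 - b) * K2 + b ^ n * K2"
    using discounted_increments_approx[OF S0(2) lim(2), of "e / 3"] e by auto
  define K where "K = \<bar>K1\<bar> + \<bar>K2\<bar> + 1"
  have K: "0 < K"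
    by (simp add: K_def add_nonneg_pos)
  obtain b C where b: "1 - e / (3 * K) \<le> b" "0 \<le> b" "b < 1"
    and le: "\<And>n. (\<Sum>k<n. b ^ k * (S1 (Suc k) - S1 k)) \<le> (\<Sum>k<n. b ^ k * (S2 (Suc k) - S2 k)) + b ^ n * C"
    using disc_le[of "1 - e / (3 * K)"] e K by auto
  have small: "(1 - b) * (K1 + K2) \<le> e / 3"
  proof -
    have "(1 - b) * (K1 + K2) \<le> (1 - b) * K"
      using b by (intro mult_left_mono) (auto simp: K_def)
    also have "\<dots> \<le> e / (3 * K) * K"
      using b K by (intro mult_right_mono) auto
    finally show ?thesis
      using K by simp
  qed
  have "L1 - L2 - (2 * e / 3 + (1 - b) * (K1 + K2)) \<le> (K1 + K2 + C) * b ^ n" for n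
    using abs_le_D2[OF K1[OF b(2,3), of n]] abs_le_D1[OF K2[OF b(2,3), of n]] le[of n]
    by (simp add: algebra_simps)
  then have "L1 - L2 - (2 * e / 3 + (1 - b) * (K1 + K2)) \<le> 0"
    using b by (intro nonpos_if_le_geometric) auto
  then show "L1 \<le> L2 + e"
    using small by simp
qed

section \<open>Discounted rewards and value iteration\<close>

definition md_sched :: "('s \<Rightarrow> 'a) \<Rightarrow> ('s,'a) sched" where
  "md_sched \<sigma> = (\<lambda>h. return_pmf (\<sigma> (cur h)))"

lemma memoryless_det_md_sched: "memoryless_det (md_sched \<sigma>)"
  unfolding memoryless_det_def md_sched_def by blast

context finite_mdp
begin

lemma valid_md_sched: "\<sigma> \<in> Pi\<^sub>E St Act \<Longrightarrow> valid_sched M (md_sched \<sigma>)"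
  by (auto simp: valid_sched_def md_sched_def)

lemma step_expect_md_sched:
  assumes "\<sigma> (cur h) \<in> Act (cur h)" "cur h \<in> St"
  shows "step_expect (md_sched \<sigma>) h g = (\<Sum>s\<in>St. pmf (Tr (cur h) (\<sigma> (cur h))) s * g (\<sigma> (cur h)) s)"
proof -
  have "step_expect (md_sched \<sigma>) h g
      = (\<Sum>a\<in>Act (cur h). if a = \<sigma> (cur h) then \<Sum>s\<in>St. pmf (Tr (cur h) a) s * g a s else 0)"
    unfolding step_expect_def md_sched_def by (intro sum.cong) (auto simp: pmf_return)
  then show ?thesis
    using assms by (simp add: sum.delta')
qed

primrec disc_rew_n :: "('s \<Rightarrow> 'a \<Rightarrow> 's \<Rightarrow> real) \<Rightarrow> 's set \<Rightarrow> real \<Rightarrow> ('s,'a) sched \<Rightarrow> nat \<Rightarrow>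
    ('s,'a) hist \<Rightarrow> real" where
  "disc_rew_n r T b \<mu> 0 h = 0"
| "disc_rew_n r T b \<mu> (Suc n) h = (if cur h \<in> T then 0 else
     step_expect \<mu> h (\<lambda>a s'. r (cur h) a s' + b * disc_rew_n r T b \<mu> n (snoc_hist h a s')))"

lemma disc_rew_n_eq_discounted_increments:
  assumes v: "valid_sched M \<mu>"
  shows "cur h \<in> St \<Longrightarrow> disc_rew_n r T b \<mu> n h =
    (\<Sum>k<n. b ^ k * (exp_rew_n M r T \<mu> (Suc k) h - exp_rew_n M r T \<mu> k h))"
proof (induction n arbitrary: h)
  case (Suc n)
  show ?case
  proof (cases "cur h \<in> T")
    case False
    define R where "R = step_expect \<mu> h (\<lambda>a s. r (cur h) a s)"
    define G where "G k = step_expect \<mu> h (\<lambda>a s. exp_rew_n M r T \<mu> k (snoc_hist h a s))" for k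
    have exp_Suc: "exp_rew_n M r T \<mu> (Suc k) h = R + G k" for k
      using False by (simp only: exp_rew_n_Suc[OF v Suc.prems] if_False step_expect_add R_def G_def)
    have G0: "G 0 = 0"
      unfolding G_def using step_expect_cmult[of \<mu> h 0 "\<lambda>a s. 0"] by simp
    have "disc_rew_n r T b \<mu> (Suc n) h = step_expect \<mu> h (\<lambda>a s. r (cur h) a s + b * (\<Sum>k<n. b ^ k *
        (exp_rew_n M r T \<mu> (Suc k) (snoc_hist h a s) - exp_rew_n M r T \<mu> k (snoc_hist h a s))))"
      using False
      by (simp del: exp_rew_n.simps) (rule step_expect_cong, simp add: Suc.IH del: exp_rew_n.simps)
    also have "\<dots> = R + b * (\<Sum>k<n. b ^ k * (G (Suc k) - G k))"
      by (simp only: step_expect_add step_expect_cmult step_expect_sum step_expect_diff R_def G_def)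
    also have "\<dots> = (\<Sum>k<Suc n. b ^ k * (exp_rew_n M r T \<mu> (Suc k) h - exp_rew_n M r T \<mu> k h))"
      unfolding sum.lessThan_Suc_shift
      by (simp add: exp_Suc G0 sum_distrib_left mult.assoc del: exp_rew_n.simps(2))
    finally show ?thesis .
  qed (simp add: exp_rew_n_target del: exp_rew_n.simps(2))
qed simp

end

lemma abs_Max_image_diff_le:
  fixes f g :: "'x \<Rightarrow> real"
  assumes "finite A" "A \<noteq> {}" "\<And>a. a \<in> A \<Longrightarrow> \<bar>f a - g a\<bar> \<le> d"
  shows "\<bar>Max (f ` A) - Max (g ` A)\<bar> \<le> d"
proof -
  have "Max (f ` A) \<in> f ` A" "Max (g ` A) \<in> g ` A"
    using assms by (intro Max_in; simp)+
  then obtain a1 a2 where a1: "a1 \<in> A" "Max (f ` A) = f a1" and a2: "a2 \<in> A" "Max (g ` A) = g a2"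
    by auto
  have "g a1 \<le> Max (g ` A)" "f a2 \<le> Max (f ` A)"
    using assms(1) a1(1) a2(1) by (auto intro: Max_ge)
  then show ?thesis
    using a1 a2 assms(3)[OF a1(1)] assms(3)[OF a2(1)] by linarith
qed

locale discounted_mdp = finite_mdp M for M :: "('s,'a) mdp" +
  fixes r :: "'s \<Rightarrow> 'a \<Rightarrow> 's \<Rightarrow> real" and T :: "'s set" and b :: real
  assumes b_nonneg: "0 \<le> b" and b_less_1: "b < 1"
begin

definition q_value :: "('s \<Rightarrow> real) \<Rightarrow> 's \<Rightarrow> 'a \<Rightarrow> real" where
  "q_value v s a = (\<Sum>s'\<in>St. pmf (Tr s a) s' * (r s a s' + b * v s'))"

definition bellman :: "('s \<Rightarrow> real) \<Rightarrow> 's \<Rightarrow> real" where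
  "bellman v s = (if s \<in> T then 0 else Max (q_value v s ` Act s))"

definition sup_norm :: "('s \<Rightarrow> real) \<Rightarrow> real" where
  "sup_norm g = Max ((\<lambda>s. \<bar>g s\<bar>) ` St)"

lemma abs_le_sup_norm: "s \<in> St \<Longrightarrow> \<bar>g s\<bar> \<le> sup_norm g"
  unfolding sup_norm_def by (rule Max_ge) auto

lemma sup_norm_le:
  assumes "\<And>s. s \<in> St \<Longrightarrow> \<bar>g s\<bar> \<le> d"
  shows "sup_norm g \<le> d"
proof -
  have "St \<noteq> {}"
    using init_in_St by blast
  then show ?thesis
    unfolding sup_norm_def using assms by (simp add: Max_le_iff)
qed

lemma sup_norm_nonneg: "0 \<le> sup_norm g"
  using abs_le_sup_norm[OF init_in_St, of g] by linarith

lemma abs_q_value_diff_le: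
  assumes "s \<in> St" "a \<in> Act s"
  shows "\<bar>q_value v s a - q_value u s a\<bar> \<le> b * sup_norm (\<lambda>s. v s - u s)"
proof -
  have "q_value v s a - q_value u s a = (\<Sum>s'\<in>St. pmf (Tr s a) s' * (b * (v s' - u s')))"
    unfolding q_value_def by (simp add: sum_subtractf[symmetric] algebra_simps)
  also have "\<bar>\<dots>\<bar> \<le> (\<Sum>s'\<in>St. pmf (Tr s a) s' * (b * sup_norm (\<lambda>s. v s - u s)))"
    by (rule order_trans[OF sum_abs], rule sum_mono)
       (use b_nonneg in \<open>auto simp: abs_mult intro!: mult_left_mono abs_le_sup_norm\<close>)
  also have "\<dots> = b * sup_norm (\<lambda>s. v s - u s)"
    using sum_pmf_Tr[OF assms] by (simp add: sum_distrib_right[symmetric])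
  finally show ?thesis .
qed

lemma bellman_contraction: "s \<in> St \<Longrightarrow> \<bar>bellman v s - bellman u s\<bar> \<le> b * sup_norm (\<lambda>s. v s - u s)"
  unfolding bellman_def using b_nonneg sup_norm_nonneg[of "\<lambda>s. v s - u s"]
  by (auto intro!: abs_Max_image_diff_le abs_q_value_diff_le Act_nonempty)

definition value_iter :: "nat \<Rightarrow> 's \<Rightarrow> real" where
  "value_iter n = (bellman ^^ n) (\<lambda>_. 0)"

definition iter_bound :: real where
  "iter_bound = sup_norm (value_iter 1) / (1 - b)"

lemma value_iter_Suc: "value_iter (Suc n) = bellman (value_iter n)"
  by (simp add: value_iter_def)

lemma sup_norm_value_iter_step: "sup_norm (\<lambda>s. value_iter (Suc n) s - value_iter n s) \<le> b ^ n * sup_norm (value_iter 1)"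
proof (induction n)
  case (Suc n)
  have "sup_norm (\<lambda>s. value_iter (Suc (Suc n)) s - value_iter (Suc n) s)
      \<le> b * sup_norm (\<lambda>s. value_iter (Suc n) s - value_iter n s)"
    by (rule sup_norm_le) (simp only: value_iter_Suc[of "Suc n"] value_iter_Suc[of n] bellman_contraction)
  also have "\<dots> \<le> b * (b ^ n * sup_norm (value_iter 1))"
    using Suc b_nonneg by (rule mult_left_mono)
  finally show ?case
    by simp
qed (simp add: value_iter_def)

lemma abs_value_iter_diff_le:
  assumes "s \<in> St" "n \<le> m"
  shows "\<bar>value_iter m s - value_iter n s\<bar> \<le> iter_bound * b ^ n"
proof -
  let ?c = "sup_norm (value_iter 1)"
  have "\<bar>value_iter m s - value_iter n s\<bar> \<le> ?c * (b ^ n - b ^ m) / (1 - b)"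
    using assms(2)
  proof (induction m rule: dec_induct)
    case (step m)
    have "\<bar>value_iter (Suc m) s - value_iter n s\<bar>
        \<le> \<bar>value_iter (Suc m) s - value_iter m s\<bar> + \<bar>value_iter m s - value_iter n s\<bar>"
      by linarith
    also have "\<dots> \<le> b ^ m * ?c + ?c * (b ^ n - b ^ m) / (1 - b)"
      using abs_le_sup_norm[OF assms(1), of "\<lambda>s. value_iter (Suc m) s - value_iter m s"]
        sup_norm_value_iter_step[of m] step.IH by linarith
    also have "\<dots> = ?c * (b ^ n - b ^ Suc m) / (1 - b)"
      using b_less_1 by (simp add: field_simps)
    finally show ?case .
  qed simp
  also have "\<dots> \<le> ?c * b ^ n / (1 - b)"
    using b_nonneg b_less_1 sup_norm_nonneg by (auto intro!: divide_right_mono mult_left_mono)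
  finally show ?thesis
    by (simp add: iter_bound_def)
qed

lemma convergent_value_iter:
  assumes "s \<in> St"
  shows "convergent (\<lambda>n. value_iter n s)"
proof -
  have "Cauchy (\<lambda>n. value_iter n s)"
  proof (rule CauchyI)
    fix e :: real
    assume e: "0 < e"
    have "(\<lambda>n. iter_bound * b ^ n) \<longlonglongrightarrow> iter_bound * 0"
      by (intro tendsto_mult tendsto_const LIMSEQ_power_zero) (use b_nonneg b_less_1 in auto)
    then obtain N where N: "\<And>n. n \<ge> N \<Longrightarrow> iter_bound * b ^ n < e"
      using LIMSEQ_D[OF _ e] by fastforce
    have close: "\<bar>value_iter m s - value_iter n s\<bar> < e" if "n \<ge> N" "n \<le> m" for m n
      using abs_value_iter_diff_le[OF assms that(2)] N[OF that(1)] by linarith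
    show "\<exists>N. \<forall>m\<ge>N. \<forall>n\<ge>N. norm (value_iter m s - value_iter n s) < e"
    proof (intro exI allI impI)
      fix m n
      assume "m \<ge> N" "n \<ge> N"
      then show "norm (value_iter m s - value_iter n s) < e"
        using close[of n m] close[of m n] by (cases "n \<le> m") (auto simp: abs_minus_commute)
    qed
  qed
  then show ?thesis
    by (simp add: Cauchy_convergent_iff)
qed

definition opt_value :: "'s \<Rightarrow> real" where
  "opt_value s = lim (\<lambda>n. value_iter n s)"

lemma abs_opt_value_diff_le: 
  assumes "s \<in> St"
  shows "\<bar>opt_value s - value_iter n s\<bar> \<le> iter_bound * b ^ n"
proof -
  have "(\<lambda>m. \<bar>value_iter m s - value_iter n s\<bar>) \<longlonglongrightarrow> \<bar>opt_value s - value_iter n s\<bar>"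
    using convergent_value_iter[OF assms] unfolding opt_value_def convergent_LIMSEQ_iff
    by (intro tendsto_intros)
  then show ?thesis
    by (rule LIMSEQ_le_const2) (use abs_value_iter_diff_le[OF assms] in auto)
qed

lemma bellman_opt_value:
  assumes "s \<in> St"
  shows "bellman opt_value s = opt_value s"
proof -
  have "\<bar>bellman opt_value s - opt_value s\<bar> \<le> (2 * iter_bound * b) * b ^ n" for n
  proof -
    have "\<bar>bellman opt_value s - opt_value s\<bar>
        \<le> \<bar>bellman opt_value s - bellman (value_iter n) s\<bar> + \<bar>value_iter (Suc n) s - opt_value s\<bar>"
      by (simp add: value_iter_Suc)
    also have "\<dots> \<le> b * (iter_bound * b ^ n) + iter_bound * b ^ Suc n"
    proof (rule add_mono)
      show "\<bar>bellman opt_value s - bellman (value_iter n) s\<bar> \<le> b * (iter_bound * b ^ n)"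
        using bellman_contraction[OF assms, of opt_value "value_iter n"] b_nonneg
          sup_norm_le[of "\<lambda>s. opt_value s - value_iter n s", OF abs_opt_value_diff_le]
        by (meson mult_left_mono order_trans)
      show "\<bar>value_iter (Suc n) s - opt_value s\<bar> \<le> iter_bound * b ^ Suc n"
        using abs_opt_value_diff_le[OF assms, of "Suc n"] by (simp add: abs_minus_commute)
    qed
    finally show ?thesis
      by (simp add: algebra_simps)
  qed
  then have "\<bar>bellman opt_value s - opt_value s\<bar> \<le> 0"
    by (intro nonpos_if_le_geometric[OF _ b_nonneg b_less_1])
  then show ?thesis
    by simp
qed

lemma opt_value_target: "s \<in> St \<Longrightarrow> s \<in> T \<Longrightarrow> opt_value s = 0"
  using bellman_opt_value[of s] by (simp add: bellman_def)

definition greedy :: "'s \<Rightarrow> 'a" where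
  "greedy = restrict (\<lambda>s. SOME a. a \<in> Act s \<and> q_value opt_value s a = Max (q_value opt_value s ` Act s)) St"

lemma greedy_maximises_q_value:
  assumes "s \<in> St"
  shows "greedy s \<in> Act s" "q_value opt_value s (greedy s) = Max (q_value opt_value s ` Act s)"
proof -
  have "Max (q_value opt_value s ` Act s) \<in> q_value opt_value s ` Act s"
    using Act_nonempty[OF assms] assms by (intro Max_in) auto
  then have "\<exists>a. a \<in> Act s \<and> q_value opt_value s a = Max (q_value opt_value s ` Act s)"
    by (metis imageE)
  from someI_ex[OF this]
  show "greedy s \<in> Act s" "q_value opt_value s (greedy s) = Max (q_value opt_value s ` Act s)"
    using assms by (auto simp: greedy_def)
qed

lemma greedy_PiE: "greedy \<in> Pi\<^sub>E St Act"
  using greedy_maximises_q_value(1) by (auto simp: greedy_def)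

lemma step_expect_q_value:
  "step_expect \<mu> h (\<lambda>a s'. r (cur h) a s' + b * v s') = (\<Sum>a\<in>Act (cur h). pmf (\<mu> h) a * q_value v (cur h) a)"
  by (simp add: step_expect_def q_value_def)

lemma disc_rew_n_le_opt_value:
  assumes v: "valid_sched M \<mu>"
  shows "cur h \<in> St \<Longrightarrow> disc_rew_n r T b \<mu> n h \<le> opt_value (cur h) + b ^ n * sup_norm opt_value"
proof (induction n arbitrary: h)
  case 0
  then show ?case
    using abs_le_sup_norm[OF 0, of opt_value] by simp
next
  case (Suc n)
  show ?case
  proof (cases "cur h \<in> T")
    case True
    have "0 \<le> b ^ Suc n * sup_norm opt_value"
      by (intro mult_nonneg_nonneg zero_le_power b_nonneg sup_norm_nonneg)
    then show ?thesis
      using opt_value_target[OF Suc.prems True] True by simp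
  next
    case False
    have "disc_rew_n r T b \<mu> (Suc n) h
        \<le> step_expect \<mu> h (\<lambda>a s'. (r (cur h) a s' + b * opt_value s') + b ^ Suc n * sup_norm opt_value)"
      unfolding disc_rew_n.simps(2) if_not_P[OF False]
    proof (rule step_expect_mono)
      fix a s
      assume "s \<in> St"
      then have "b * disc_rew_n r T b \<mu> n (snoc_hist h a s) \<le> b * (opt_value s + b ^ n * sup_norm opt_value)"
        using mult_left_mono[OF Suc.IH[of "snoc_hist h a s"] b_nonneg] by simp
      then show "r (cur h) a s + b * disc_rew_n r T b \<mu> n (snoc_hist h a s)
          \<le> r (cur h) a s + b * opt_value s + b ^ Suc n * sup_norm opt_value"
        by (simp add: algebra_simps)
    qed
    also have "\<dots> = (\<Sum>a\<in>Act (cur h). pmf (\<mu> h) a * q_value opt_value (cur h) a) + b ^ Suc n * sup_norm opt_value"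
      by (subst step_expect_add[of \<mu> h "\<lambda>a s'. r (cur h) a s' + b * opt_value s'"])
         (simp only: step_expect_q_value step_expect_const[OF v Suc.prems])
    also have "(\<Sum>a\<in>Act (cur h). pmf (\<mu> h) a * q_value opt_value (cur h) a)
        \<le> (\<Sum>a\<in>Act (cur h). pmf (\<mu> h) a * Max (q_value opt_value (cur h) ` Act (cur h)))"
      using Suc.prems by (intro sum_mono mult_left_mono) auto
    also have "\<dots> = opt_value (cur h)"
      using sum_pmf_sched[OF v Suc.prems] bellman_opt_value[OF Suc.prems] False
      by (simp add: sum_distrib_right[symmetric] bellman_def)
    finally show ?thesis
      by simp
  qed
qed

lemma opt_value_le_disc_rew_n_greedy:
  "cur h \<in> St \<Longrightarrow> opt_value (cur h) - b ^ n * sup_norm opt_value \<le> disc_rew_n r T b (md_sched greedy) n h"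
proof (induction n arbitrary: h)
  case 0
  then show ?case
    using abs_le_sup_norm[OF 0, of opt_value] by simp
next
  case (Suc n)
  show ?case
  proof (cases "cur h \<in> T")
    case True
    have "0 \<le> b ^ Suc n * sup_norm opt_value"
      by (intro mult_nonneg_nonneg zero_le_power b_nonneg sup_norm_nonneg)
    then show ?thesis
      using opt_value_target[OF Suc.prems True] True by simp
  next
    case False
    have "opt_value (cur h) = q_value opt_value (cur h) (greedy (cur h))"
      using greedy_maximises_q_value(2)[OF Suc.prems] bellman_opt_value[OF Suc.prems] False by (simp add: bellman_def)
    also have "\<dots> = step_expect (md_sched greedy) h (\<lambda>a s'. r (cur h) a s' + b * opt_value s')"
      using greedy_maximises_q_value(1)[OF Suc.prems] Suc.prems by (simp add: step_expect_md_sched q_value_def)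
    finally have "opt_value (cur h) - b ^ Suc n * sup_norm opt_value
        = step_expect (md_sched greedy) h (\<lambda>a s'. (r (cur h) a s' + b * opt_value s') - b ^ Suc n * sup_norm opt_value)"
      using valid_md_sched[OF greedy_PiE] Suc.prems
      by (subst step_expect_diff) (simp add: step_expect_const)
    also have "\<dots> \<le> disc_rew_n r T b (md_sched greedy) (Suc n) h"
      unfolding disc_rew_n.simps(2) if_not_P[OF False]
    proof (rule step_expect_mono)
      fix a s
      assume "s \<in> St"
      then have "b * (opt_value s - b ^ n * sup_norm opt_value) \<le> b * disc_rew_n r T b (md_sched greedy) n (snoc_hist h a s)"
        using mult_left_mono[OF Suc.IH[of "snoc_hist h a s"] b_nonneg] by simp
      then show "r (cur h) a s + b * opt_value s - b ^ Suc n * sup_norm opt_value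
          \<le> r (cur h) a s + b * disc_rew_n r T b (md_sched greedy) n (snoc_hist h a s)"
        by (simp add: algebra_simps)
    qed
    finally show ?thesis .
  qed
qed

lemma disc_rew_n_le_greedy:
  "valid_sched M \<mu> \<Longrightarrow> disc_rew_n r T b \<mu> n (m_init M, [])
    \<le> disc_rew_n r T b (md_sched greedy) n (m_init M, []) + b ^ n * (2 * sup_norm opt_value)"
  using disc_rew_n_le_opt_value[of \<mu> "(m_init M, [])" n] opt_value_le_disc_rew_n_greedy[of "(m_init M, [])" n]
  by simp

end

context finite_mdp
begin

section \<open>Optimal memoryless deterministic schedulers\<close>

lemma exists_md_sched_disc_optimal:
  assumes "0 \<le> b" "b < 1"
  shows "\<exists>\<sigma>\<in>Pi\<^sub>E St Act. \<exists>C. \<forall>\<mu> n. valid_sched M \<mu> \<longrightarrow>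
    disc_rew_n r T b \<mu> n (m_init M, []) \<le> disc_rew_n r T b (md_sched \<sigma>) n (m_init M, []) + b ^ n * C"
proof -
  interpret discounted_mdp M r T b
    by unfold_locales (use assms in auto)
  show ?thesis
    by (intro bexI[OF _ greedy_PiE] exI[of _ "2 * sup_norm opt_value"] allI impI disc_rew_n_le_greedy)
qed

lemma exists_md_sched_disc_optimal_near_1:
  "\<exists>\<sigma>\<in>Pi\<^sub>E St Act. \<forall>B<1. \<exists>b C. B \<le> b \<and> 0 \<le> b \<and> b < 1 \<and> (\<forall>\<mu> n. valid_sched M \<mu> \<longrightarrow>
    disc_rew_n r T b \<mu> n (m_init M, []) \<le> disc_rew_n r T b (md_sched \<sigma>) n (m_init M, []) + b ^ n * C)"
proof -
  define disc where "disc k = real k / real (Suc k)" for k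
  have disc: "0 \<le> disc k" "disc k < 1" for k
    by (auto simp: disc_def)
  define opt where "opt k \<sigma> C \<longleftrightarrow> (\<forall>\<mu> n. valid_sched M \<mu> \<longrightarrow>
    disc_rew_n r T (disc k) \<mu> n (m_init M, []) \<le> disc_rew_n r T (disc k) (md_sched \<sigma>) n (m_init M, []) + disc k ^ n * C)"
    for k \<sigma> C
  have "\<forall>k. \<exists>\<sigma>. \<sigma> \<in> Pi\<^sub>E St Act \<and> (\<exists>C. opt k \<sigma> C)"
    using exists_md_sched_disc_optimal[OF disc, where r = r and T = T] unfolding opt_def by blast
  then obtain \<sigma>k where \<sigma>k_opt: "\<forall>k. \<sigma>k k \<in> Pi\<^sub>E St Act \<and> (\<exists>C. opt k (\<sigma>k k) C)"
    by (auto dest: choice)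
  then have \<sigma>k: "\<And>k. \<sigma>k k \<in> Pi\<^sub>E St Act" and "\<forall>k. \<exists>C. opt k (\<sigma>k k) C"
    by auto
  then obtain Ck where Ck: "\<And>k. opt k (\<sigma>k k) (Ck k)"
    using choice[of "\<lambda>k C. opt k (\<sigma>k k) C"] by blast
  have "finite (range \<sigma>k)"
    by (rule finite_subset[OF _ finite_PiE[OF finite_St finite_Act]]) (use \<sigma>k in auto)
  then obtain k0 where k0: "infinite {k. \<sigma>k k = \<sigma>k k0}"
    using pigeonhole_infinite[OF infinite_UNIV_nat] by auto
  have "\<exists>b C. B \<le> b \<and> 0 \<le> b \<and> b < 1 \<and> (\<forall>\<mu> n. valid_sched M \<mu> \<longrightarrow>
      disc_rew_n r T b \<mu> n (m_init M, []) \<le> disc_rew_n r T b (md_sched (\<sigma>k k0)) n (m_init M, []) + b ^ n * C)"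
    if B: "B < 1" for B
  proof -
    have "disc \<longlonglongrightarrow> 1"
      unfolding disc_def by (rule LIMSEQ_n_over_Suc_n)
    then have "\<forall>\<^sub>F k in sequentially. B < disc k"
      using B by (rule order_tendstoD(1))
    then obtain N where N: "\<And>k. k \<ge> N \<Longrightarrow> B < disc k"
      unfolding eventually_sequentially by blast
    obtain k where k: "\<sigma>k k = \<sigma>k k0" "k \<ge> N"
      using k0 unfolding infinite_nat_iff_unbounded_le by blast
    have "B \<le> disc k"
      using N[OF k(2)] by simp
    then show ?thesis
      using disc[of k] Ck[of k] unfolding opt_def k(1) by blast
  qed
  then show ?thesis
    using \<sigma>k[of k0] by blast
qed

theorem exists_md_sched_optimal:
  assumes conv: "\<And>\<mu>. valid_sched M \<mu> \<Longrightarrow> convergent (\<lambda>n. exp_rew_n M r T \<mu> n (m_init M, []))"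
  shows "\<exists>\<sigma>\<in>Pi\<^sub>E St Act. \<forall>\<mu>. valid_sched M \<mu> \<longrightarrow> exp_rew M r T \<mu> \<le> exp_rew M r T (md_sched \<sigma>)"
proof -
  obtain \<sigma> where \<sigma>: "\<sigma> \<in> Pi\<^sub>E St Act" and near_1: "\<forall>B<1. \<exists>b C. B \<le> b \<and> 0 \<le> b \<and> b < 1 \<and>
      (\<forall>\<mu> n. valid_sched M \<mu> \<longrightarrow>
        disc_rew_n r T b \<mu> n (m_init M, []) \<le> disc_rew_n r T b (md_sched \<sigma>) n (m_init M, []) + b ^ n * C)"
    using exists_md_sched_disc_optimal_near_1[of r T] by blast
  have valid_\<sigma>: "valid_sched M (md_sched \<sigma>)"
    by (rule valid_md_sched[OF \<sigma>])
  have "exp_rew M r T \<mu> \<le> exp_rew M r T (md_sched \<sigma>)" if valid_\<mu>: "valid_sched M \<mu>" for \<mu>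
  proof -
    let ?S1 = "\<lambda>n. exp_rew_n M r T \<mu> n (m_init M, [])"
      and ?S2 = "\<lambda>n. exp_rew_n M r T (md_sched \<sigma>) n (m_init M, [])"
    show ?thesis
    proof (rule limit_le_if_discounted_increments_le[of ?S1 ?S2])
    show "?S1 \<longlonglongrightarrow> exp_rew M r T \<mu>" "?S2 \<longlonglongrightarrow> exp_rew M r T (md_sched \<sigma>)"
      using conv[OF valid_\<mu>] conv[OF valid_\<sigma>] unfolding exp_rew_def by (simp_all add: convergent_LIMSEQ_iff)
    show "\<exists>b C. B \<le> b \<and> 0 \<le> b \<and> b < 1 \<and> (\<forall>n. (\<Sum>k<n. b ^ k * (?S1 (Suc k) - ?S1 k))
        \<le> (\<Sum>k<n. b ^ k * (?S2 (Suc k) - ?S2 k)) + b ^ n * C)" if B: "B < 1" for B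
    proof -
      obtain b C where b: "B \<le> b" "0 \<le> b" "b < 1" and le: "\<And>\<mu> n. valid_sched M \<mu> \<Longrightarrow>
          disc_rew_n r T b \<mu> n (m_init M, []) \<le> disc_rew_n r T b (md_sched \<sigma>) n (m_init M, []) + b ^ n * C"
        using near_1 B by blast
      show ?thesis
        using b le[OF valid_\<mu>]
        by (intro exI[of _ b] exI[of _ C])
           (simp add: disc_rew_n_eq_discounted_increments[OF valid_\<mu>]
            disc_rew_n_eq_discounted_increments[OF valid_\<sigma>])
    qed
  qed simp_all
  qed
  then show ?thesis
    using \<sigma> by blast
qed

end

section \<open>Mixing schedulers\<close>

definition mix_pmf :: "real \<Rightarrow> 'a pmf \<Rightarrow> 'a pmf \<Rightarrow> 'a pmf" where
  "mix_pmf c p q = bind_pmf (bernoulli_pmf c) (\<lambda>b. if b then p else q)"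

lemma pmf_mix_pmf: "0 \<le> c \<Longrightarrow> c \<le> 1 \<Longrightarrow> pmf (mix_pmf c p q) x = c * pmf p x + (1 - c) * pmf q x"
  unfolding mix_pmf_def by (simp add: pmf_bind mult.commute)

lemma set_pmf_mix_pmf: "set_pmf (mix_pmf c p q) \<subseteq> set_pmf p \<union> set_pmf q"
  unfolding mix_pmf_def by (auto simp: set_bind_pmf split: if_splits)

definition hist_weight :: "('s,'a) sched \<Rightarrow> ('s,'a) hist \<Rightarrow> real" where
  "hist_weight \<mu> h = (\<Prod>i<length (snd h). pmf (\<mu> (fst h, take i (snd h))) (fst (snd h ! i)))"

lemma hist_weight_Nil [simp]: "hist_weight \<mu> (x, []) = 1"
  by (simp add: hist_weight_def)

lemma hist_weight_snoc: "hist_weight \<mu> (snoc_hist h a s) = hist_weight \<mu> h * pmf (\<mu> h) a"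
  unfolding hist_weight_def by (auto simp: nth_append intro!: prod.cong)

lemma hist_weight_nonneg: "0 \<le> hist_weight \<mu> h"
  unfolding hist_weight_def by (simp add: prod_nonneg)

definition posterior :: "real \<Rightarrow> real \<Rightarrow> real \<Rightarrow> real" where
  "posterior c x y = (if c * x + (1 - c) * y = 0 then 0 else c * x / (c * x + (1 - c) * y))"

lemma posterior_bounds:
  assumes "0 \<le> c" "c \<le> 1" "0 \<le> x" "0 \<le> y"
  shows "0 \<le> posterior c x y" "posterior c x y \<le> 1"
proof -
  have nonneg: "0 \<le> c * x" "0 \<le> (1 - c) * y"
    using assms by simp_all
  show "0 \<le> posterior c x y"
    unfolding posterior_def using nonneg by simp
  show "posterior c x y \<le> 1"
  proof (cases "c * x + (1 - c) * y = 0")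
    case False
    then have "0 < c * x + (1 - c) * y"
      using nonneg by linarith
    then show ?thesis
      unfolding posterior_def using nonneg False by (simp add: divide_le_eq_1_pos)
  qed (simp add: posterior_def)
qed

lemma mult_posterior_comb:
  assumes "0 \<le> c" "c \<le> 1" "0 \<le> x" "0 \<le> y"
  shows "(c * x + (1 - c) * y) * (posterior c x y * a + (1 - posterior c x y) * b)
    = c * x * a + (1 - c) * y * b"
proof (cases "c * x + (1 - c) * y = 0")
  case True
  moreover have "0 \<le> c * x" "0 \<le> (1 - c) * y"
    using assms by simp_all
  ultimately have zero: "c * x = 0" "(1 - c) * y = 0"
    by linarith+
  show ?thesis
    unfolding True zero by simp
next
  case False
  let ?D = "c * x + (1 - c) * y" and ?p = "posterior c x y"
  have p: "?D * ?p = c * x"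
    using False by (simp add: posterior_def)
  then have q: "?D * (1 - ?p) = (1 - c) * y"
    by (simp add: algebra_simps)
  have "?D * (?p * a + (1 - ?p) * b) = (?D * ?p) * a + (?D * (1 - ?p)) * b"
    by (simp add: algebra_simps)
  then show ?thesis
    unfolding p q .
qed

text \<open>Kuhn's theorem: the behavioural scheduler equivalent to following \<mu>1 with
  probability c and \<mu>2 otherwise mixes, after history h, by the posterior probability of \<mu>1
  given h.\<close>
definition mix_sched :: "real \<Rightarrow> ('s,'a) sched \<Rightarrow> ('s,'a) sched \<Rightarrow> ('s,'a) sched" where
  "mix_sched c \<mu>1 \<mu>2 h = mix_pmf (posterior c (hist_weight \<mu>1 h) (hist_weight \<mu>2 h)) (\<mu>1 h) (\<mu>2 h)"

lemma weighted_pmf_mix_sched: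
  assumes "0 \<le> c" "c \<le> 1"
  shows "(c * hist_weight \<mu>1 h + (1 - c) * hist_weight \<mu>2 h) * pmf (mix_sched c \<mu>1 \<mu>2 h) a
    = c * hist_weight \<mu>1 h * pmf (\<mu>1 h) a + (1 - c) * hist_weight \<mu>2 h * pmf (\<mu>2 h) a"
proof -
  let ?x = "hist_weight \<mu>1 h" and ?y = "hist_weight \<mu>2 h"
  have "pmf (mix_sched c \<mu>1 \<mu>2 h) a
      = posterior c ?x ?y * pmf (\<mu>1 h) a + (1 - posterior c ?x ?y) * pmf (\<mu>2 h) a"
    unfolding mix_sched_def by (intro pmf_mix_pmf posterior_bounds assms hist_weight_nonneg)
  then show ?thesis
    by (simp only: mult_posterior_comb[OF assms hist_weight_nonneg hist_weight_nonneg])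
qed

context finite_mdp
begin

lemma valid_mix_sched:
  assumes "valid_sched M \<mu>1" "valid_sched M \<mu>2"
  shows "valid_sched M (mix_sched c \<mu>1 \<mu>2)"
proof -
  have "set_pmf (mix_sched c \<mu>1 \<mu>2 h) \<subseteq> set_pmf (\<mu>1 h) \<union> set_pmf (\<mu>2 h)" for h
    unfolding mix_sched_def by (rule set_pmf_mix_pmf)
  then show ?thesis
    using set_pmf_sched[OF assms(1)] set_pmf_sched[OF assms(2)] unfolding valid_sched_def by blast
qed

lemma exp_rew_n_mix_sched_weighted:
  assumes c: "0 \<le> c" "c \<le> 1" and v1: "valid_sched M \<mu>1" and v2: "valid_sched M \<mu>2"
  shows "cur h \<in> St \<Longrightarrow> (c * hist_weight \<mu>1 h + (1 - c) * hist_weight \<mu>2 h) * exp_rew_n M r T (mix_sched c \<mu>1 \<mu>2) n h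
    = c * hist_weight \<mu>1 h * exp_rew_n M r T \<mu>1 n h + (1 - c) * hist_weight \<mu>2 h * exp_rew_n M r T \<mu>2 n h"
proof (induction n arbitrary: h)
  case (Suc n)
  let ?m = "mix_sched c \<mu>1 \<mu>2"
  show ?case
  proof (cases "cur h \<in> T")
    case False
    define W where "W = c * hist_weight \<mu>1 h + (1 - c) * hist_weight \<mu>2 h"
    define A where "A a = c * hist_weight \<mu>1 h * pmf (\<mu>1 h) a" for a
    define B where "B a = (1 - c) * hist_weight \<mu>2 h * pmf (\<mu>2 h) a" for a
    define F where "F \<mu> a = (\<Sum>s\<in>St. pmf (Tr (cur h) a) s * (r (cur h) a s + exp_rew_n M r T \<mu> n (snoc_hist h a s)))"
      for \<mu> a
    have exp_Suc: "exp_rew_n M r T \<mu> (Suc n) h = (\<Sum>a\<in>Act (cur h). pmf (\<mu> h) a * F \<mu> a)"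
      if "valid_sched M \<mu>" for \<mu>
      using False by (simp only: exp_rew_n_Suc[OF that Suc.prems] if_False step_expect_def F_def)
    have F_mix: "(A a + B a) * F ?m a = A a * F \<mu>1 a + B a * F \<mu>2 a" for a
    proof -
      have "(A a + B a) * exp_rew_n M r T ?m n (snoc_hist h a s)
          = A a * exp_rew_n M r T \<mu>1 n (snoc_hist h a s) + B a * exp_rew_n M r T \<mu>2 n (snoc_hist h a s)"
        if "s \<in> St" for s
        using Suc.IH[of "snoc_hist h a s"] that by (simp add: hist_weight_snoc A_def B_def mult_ac)
      note IH = this
      have "(A a + B a) * F ?m a = (\<Sum>s\<in>St. pmf (Tr (cur h) a) s * ((A a + B a) * r (cur h) a s
          + (A a + B a) * exp_rew_n M r T ?m n (snoc_hist h a s)))"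
        unfolding F_def sum_distrib_left by (simp add: algebra_simps)
      also have "\<dots> = (\<Sum>s\<in>St. pmf (Tr (cur h) a) s * ((A a + B a) * r (cur h) a s
          + (A a * exp_rew_n M r T \<mu>1 n (snoc_hist h a s) + B a * exp_rew_n M r T \<mu>2 n (snoc_hist h a s))))"
        using IH by (intro sum.cong refl) (simp only:)
      also have "\<dots> = A a * F \<mu>1 a + B a * F \<mu>2 a"
        unfolding F_def sum_distrib_left sum.distrib[symmetric] by (intro sum.cong) (simp_all add: algebra_simps)
      finally show ?thesis .
    qed
    have "W * exp_rew_n M r T ?m (Suc n) h = (\<Sum>a\<in>Act (cur h). (W * pmf (?m h) a) * F ?m a)"
      unfolding exp_Suc[OF valid_mix_sched[OF v1 v2]] sum_distrib_left by (simp add: mult.assoc)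
    also have "\<dots> = (\<Sum>a\<in>Act (cur h). A a * F \<mu>1 a + B a * F \<mu>2 a)"
      unfolding W_def weighted_pmf_mix_sched[OF c] A_def[symmetric] B_def[symmetric] F_mix ..
    also have "\<dots> = c * hist_weight \<mu>1 h * exp_rew_n M r T \<mu>1 (Suc n) h + (1 - c) * hist_weight \<mu>2 h * exp_rew_n M r T \<mu>2 (Suc n) h"
      unfolding exp_Suc[OF v1] exp_Suc[OF v2] sum.distrib sum_distrib_left A_def B_def by (simp add: mult.assoc)
    finally show ?thesis
      by (simp add: W_def)
  qed (simp add: exp_rew_n_target del: exp_rew_n.simps)
qed simp

lemma exp_rew_mix_sched:
  assumes c: "0 \<le> c" "c \<le> 1" and v1: "valid_sched M \<mu>1" and v2: "valid_sched M \<mu>2"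
    and conv1: "convergent (\<lambda>n. exp_rew_n M r T \<mu>1 n (m_init M, []))"
    and conv2: "convergent (\<lambda>n. exp_rew_n M r T \<mu>2 n (m_init M, []))"
  shows "exp_rew M r T (mix_sched c \<mu>1 \<mu>2) = c * exp_rew M r T \<mu>1 + (1 - c) * exp_rew M r T \<mu>2"
proof -
  have "exp_rew_n M r T (mix_sched c \<mu>1 \<mu>2) n (m_init M, [])
      = c * exp_rew_n M r T \<mu>1 n (m_init M, []) + (1 - c) * exp_rew_n M r T \<mu>2 n (m_init M, [])" for n
    using exp_rew_n_mix_sched_weighted[OF assms(1-4), of "(m_init M, [])" r T n] by simp
  moreover have "(\<lambda>n. c * exp_rew_n M r T \<mu>1 n (m_init M, []) + (1 - c) * exp_rew_n M r T \<mu>2 n (m_init M, []))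
      \<longlonglongrightarrow> c * exp_rew M r T \<mu>1 + (1 - c) * exp_rew M r T \<mu>2"
    using conv1 conv2 unfolding exp_rew_def convergent_LIMSEQ_iff by (intro tendsto_intros)
  ultimately show ?thesis
    unfolding exp_rew_def by (simp add: limI)
qed

end

section \<open>Agent-task products and Algorithm 2\<close>

lemma sum_UNIV_Plus:
  "(\<Sum>k\<in>(UNIV :: ('a::finite + 'b::finite) set). g k) = (\<Sum>i\<in>UNIV. g (Inl i)) + (\<Sum>j\<in>UNIV. g (Inr j))"
  by (subst UNIV_Plus_UNIV[symmetric], subst sum.Plus) (simp_all add: comp_def)

locale task_alloc =
  fixes X :: "('n::finite,'s,'a,'q,'l) inst"
  assumes agents_wf: "\<forall>i. wf_mdp (ag X i)"
    and tasks_wf: "\<forall>j. wf_dfa (task X j)"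
    and reward_finite: "\<forall>i j \<mu>. valid_sched (pmdp X i j) \<mu> \<longrightarrow>
          convergent (\<lambda>n. exp_rew_n (pmdp X i j) (prew X i j (Inl i)) (pdone X j) \<mu> n
                              (m_init (pmdp X i j), []))"
begin

lemma finite_mdp_pmdp: "finite_mdp (pmdp X i j)"
proof
  have "wf_mdp (ag X i)" "wf_dfa (task X j)"
    using agents_wf tasks_wf by auto
  then show "wf_mdp (pmdp X i j)"
    unfolding wf_mdp_def wf_dfa_def pmdp_def prod_mdp_def by (auto simp: case_prod_beta)
qed

lemma init_in_pmdp_states [simp]: "m_init (pmdp X i j) \<in> m_states (pmdp X i j)"
  by (rule finite_mdp.init_in_St[OF finite_mdp_pmdp])

abbreviation prew_n :: "'n \<Rightarrow> 'n \<Rightarrow> 'n + 'n \<Rightarrow> ('s \<times> 'q, 'a) sched \<Rightarrow> nat \<Rightarrow> real" where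
  "prew_n i j k \<mu> n \<equiv> exp_rew_n (pmdp X i j) (prew X i j k) (pdone X j) \<mu> n (m_init (pmdp X i j), [])"

lemma exp_rew_n_acceptance_le_1:
  assumes v: "valid_sched (pmdp X i j) \<mu>"
  shows "cur h \<in> m_states (pmdp X i j) \<Longrightarrow> exp_rew_n (pmdp X i j) (prew X i j (Inr j')) (pdone X j) \<mu> n h \<le> 1"
proof (induction n arbitrary: h)
  case (Suc n)
  interpret finite_mdp "pmdp X i j"
    by (rule finite_mdp_pmdp)
  show ?case
  proof (cases "cur h \<in> pdone X j")
    case False
    have "step_expect \<mu> h (\<lambda>a s'. prew X i j (Inr j') (cur h) a s'
        + exp_rew_n (pmdp X i j) (prew X i j (Inr j')) (pdone X j) \<mu> n (snoc_hist h a s')) \<le> step_expect \<mu> h (\<lambda>a s'. 1)"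
    proof (rule step_expect_mono)
      fix a s
      assume "s \<in> St"
      show "prew X i j (Inr j') (cur h) a s
          + exp_rew_n (pmdp X i j) (prew X i j (Inr j')) (pdone X j) \<mu> n (snoc_hist h a s) \<le> 1"
      proof (cases "j' = j \<and> snd (cur h) \<notin> d_acc (task X j) \<and> snd s \<in> d_acc (task X j)")
        case True
        then have "s \<in> pdone X j"
          by (auto simp: pdone_def)
        then show ?thesis
          using True by (simp add: prew_def exp_rew_n_target del: exp_rew_n.simps)
      next
        case False
        then have "prew X i j (Inr j') (cur h) a s = 0"
          by (auto simp: prew_def)
        then show ?thesis
          using Suc.IH[of "snoc_hist h a s"] \<open>s \<in> St\<close> by simp
      qed
    qed
    then show ?thesis
      using False by (simp only: exp_rew_n_Suc[OF v Suc.prems] if_False step_expect_const[OF v Suc.prems])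
  qed (simp add: finite_mdp.exp_rew_n_target[OF finite_mdp_pmdp] del: exp_rew_n.simps)
qed simp

lemma convergent_prew_n:
  assumes v: "valid_sched (pmdp X i j) \<mu>"
  shows "convergent (prew_n i j k \<mu>)"
proof -
  interpret finite_mdp "pmdp X i j"
    by (rule finite_mdp_pmdp)
  show ?thesis
  proof (cases k)
    case (Inl i')
    show ?thesis
    proof (cases "i' = i")
      case False
      have "prew_n i j k \<mu> n = 0" for n
        by (rule exp_rew_n_zero_reward[OF v]) (use False Inl in \<open>auto simp: prew_def\<close>)
      then show ?thesis
        by (simp add: convergent_const)
    qed (use reward_finite v Inl in auto)
  next
    case (Inr j')
    have "incseq (prew_n i j k \<mu>)"
      by (rule incseq_SucI, rule conjunct2[OF exp_rew_n_nonneg_Suc_mono[OF v]]) (auto simp: Inr prew_def)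
    moreover have "bdd_above (range (prew_n i j k \<mu>))"
      unfolding Inr by (intro bdd_aboveI2[where M = 1] exp_rew_n_acceptance_le_1[OF v]) simp
    ultimately show ?thesis
      unfolding convergent_def using LIMSEQ_incseq_SUP by blast
  qed
qed

lemma weighted_prew_n_eq:
  assumes v: "valid_sched (pmdp X i j) \<mu>"
  shows "exp_rew_n (pmdp X i j) (\<lambda>x a y. \<Sum>k\<in>UNIV. w $ k * prew X i j k x a y) (pdone X j) \<mu> n (m_init (pmdp X i j), [])
    = (\<Sum>k\<in>UNIV. w $ k * prew_n i j k \<mu> n)"
  by (rule finite_mdp.exp_rew_n_lincomb[OF finite_mdp_pmdp v]) simp

lemma convergent_weighted_prew_n:
  assumes v: "valid_sched (pmdp X i j) \<mu>"
  shows "convergent (\<lambda>n. exp_rew_n (pmdp X i j) (\<lambda>x a y. \<Sum>k\<in>UNIV. w $ k * prew X i j k x a y) (pdone X j) \<mu> n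
      (m_init (pmdp X i j), []))"
  unfolding weighted_prew_n_eq[OF v] using convergent_prew_n[OF v]
  by (intro convergent_sum convergent_mult convergent_const) auto

lemma wval_eq_sum_pval:
  assumes v: "valid_sched (pmdp X i j) \<mu>"
  shows "wval X i j w \<mu> = (\<Sum>k\<in>UNIV. w $ k * pval X i j \<mu> k)"
proof -
  have "(\<lambda>n. \<Sum>k\<in>UNIV. w $ k * prew_n i j k \<mu> n) \<longlonglongrightarrow> (\<Sum>k\<in>UNIV. w $ k * pval X i j \<mu> k)"
    unfolding pval_def exp_rew_def using convergent_prew_n[OF v]
    by (intro tendsto_intros) (simp add: convergent_LIMSEQ_iff)
  then show ?thesis
    unfolding wval_def exp_rew_def weighted_prew_n_eq[OF v] by (simp add: limI)
qed

lemma pval_other_agent: "valid_sched (pmdp X i j) \<mu> \<Longrightarrow> i' \<noteq> i \<Longrightarrow> pval X i j \<mu> (Inl i') = 0"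
  unfolding pval_def exp_rew_def
  by (subst finite_mdp.exp_rew_n_zero_reward[OF finite_mdp_pmdp]) (auto simp: prew_def)

lemma pval_other_task: "valid_sched (pmdp X i j) \<mu> \<Longrightarrow> j' \<noteq> j \<Longrightarrow> pval X i j \<mu> (Inr j') = 0"
  unfolding pval_def exp_rew_def
  by (subst finite_mdp.exp_rew_n_zero_reward[OF finite_mdp_pmdp]) (auto simp: prew_def)

lemma wval_eq_cost_acceptance:
  assumes v: "valid_sched (pmdp X i j) \<mu>"
  shows "wval X i j w \<mu> = w $ Inl i * pval X i j \<mu> (Inl i) + w $ Inr j * pval X i j \<mu> (Inr j)"
proof -
  have "wval X i j w \<mu> = (\<Sum>i'\<in>UNIV. w $ Inl i' * pval X i j \<mu> (Inl i')) + (\<Sum>j'\<in>UNIV. w $ Inr j' * pval X i j \<mu> (Inr j'))"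
    unfolding wval_eq_sum_pval[OF v] by (rule sum_UNIV_Plus)
  also have "(\<Sum>i'\<in>UNIV. w $ Inl i' * pval X i j \<mu> (Inl i')) = (\<Sum>i'\<in>UNIV. if i' = i then w $ Inl i * pval X i j \<mu> (Inl i) else 0)"
    by (intro sum.cong refl) (auto simp: pval_other_agent[OF v])
  also have "(\<Sum>j'\<in>UNIV. w $ Inr j' * pval X i j \<mu> (Inr j')) = (\<Sum>j'\<in>UNIV. if j' = j then w $ Inr j * pval X i j \<mu> (Inr j) else 0)"
    by (intro sum.cong refl) (auto simp: pval_other_task[OF v])
  finally show ?thesis
    by simp
qed

lemma exists_md_sched_wval_optimal:
  "\<exists>\<sigma>\<in>Pi\<^sub>E (m_states (pmdp X i j)) (m_act (pmdp X i j)). \<forall>\<mu>. valid_sched (pmdp X i j) \<mu> \<longrightarrow>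
      wval X i j w \<mu> \<le> wval X i j w (md_sched \<sigma>)"
  unfolding wval_def
  by (rule finite_mdp.exists_md_sched_optimal[OF finite_mdp_pmdp convergent_weighted_prew_n])

lemma exp_rew_mix_sched_pval:
  assumes "0 \<le> c" "c \<le> 1" "valid_sched (pmdp X i j) \<mu>1" "valid_sched (pmdp X i j) \<mu>2"
  shows "pval X i j (mix_sched c \<mu>1 \<mu>2) k = c * pval X i j \<mu>1 k + (1 - c) * pval X i j \<mu>2 k"
  unfolding pval_def
  by (rule finite_mdp.exp_rew_mix_sched[OF finite_mdp_pmdp assms convergent_prew_n convergent_prew_n])
    (use assms in auto)

end

definition assign_vec :: "('n::finite,'s,'a,'q,'l) inst \<Rightarrow> ('n \<Rightarrow> 'n \<Rightarrow> ('s \<times> 'q, 'a) sched) \<Rightarrow> ('n \<Rightarrow> 'n) \<Rightarrow>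
    real^('n+'n)" where
  "assign_vec X F f = (\<chi> k. case k of Inl i \<Rightarrow> pval X i (inv f i) (F i (inv f i)) (Inl i)
                                   | Inr j \<Rightarrow> pval X (f j) j (F (f j) j) (Inr j))"

lemma mem_alg2_iff: "r \<in> alg2 X w \<longleftrightarrow> (\<exists>\<mu> f.
      (\<forall>i j. valid_sched (pmdp X i j) (\<mu> i j) \<and> memoryless_det (\<mu> i j) \<and>
         (\<forall>\<mu>'. valid_sched (pmdp X i j) \<mu>' \<longrightarrow> wval X i j w \<mu>' \<le> wval X i j w (\<mu> i j))) \<and>
      bij f \<and>
      (\<forall>g. bij g \<longrightarrow> (\<Sum>j\<in>UNIV. wval X (g j) j w (\<mu> (g j) j)) \<le> (\<Sum>j\<in>UNIV. wval X (f j) j w (\<mu> (f j) j))) \<and>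
      r = assign_vec X \<mu> f)"
  unfolding alg2_def assign_vec_def by simp

lemma mem_C0_iff: "x \<in> C0 X \<longleftrightarrow> (\<exists>p \<sigma>. x = (\<chi> k. measure_pmf.expectation p (\<lambda>f. assign_vec X (\<sigma> f) f $ k)) \<and>
      (\<forall>f\<in>set_pmf p. bij f) \<and> (\<forall>f i j. valid_sched (pmdp X i j) (\<sigma> f i j)))"
  unfolding C0_def assign_vec_def by simp

context task_alloc
begin

lemma inner_assign_vec:
  assumes f: "bij f" and v: "\<And>i j. valid_sched (pmdp X i j) (F i j)"
  shows "w \<bullet> assign_vec X F f = (\<Sum>j\<in>UNIV. wval X (f j) j w (F (f j) j))"
proof -
  have "w \<bullet> assign_vec X F f = (\<Sum>i\<in>UNIV. w $ Inl i * pval X i (inv f i) (F i (inv f i)) (Inl i))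
      + (\<Sum>j\<in>UNIV. w $ Inr j * pval X (f j) j (F (f j) j) (Inr j))"
    unfolding inner_vec_def by (subst sum_UNIV_Plus) (simp add: assign_vec_def)
  also have "(\<Sum>i\<in>UNIV. w $ Inl i * pval X i (inv f i) (F i (inv f i)) (Inl i))
      = (\<Sum>j\<in>UNIV. w $ Inl (f j) * pval X (f j) j (F (f j) j) (Inl (f j)))"
    using f by (subst sum.reindex_bij_betw[symmetric, of f UNIV]) (simp_all add: bij_betw_def bij_is_inj)
  finally show ?thesis
    using v by (simp add: wval_eq_cost_acceptance sum.distrib)
qed

lemma alg2_nonempty: "alg2 X w \<noteq> {}"
proof -
  have "\<forall>i j. \<exists>\<sigma>. \<sigma> \<in> Pi\<^sub>E (m_states (pmdp X i j)) (m_act (pmdp X i j)) \<and>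
      (\<forall>\<mu>. valid_sched (pmdp X i j) \<mu> \<longrightarrow> wval X i j w \<mu> \<le> wval X i j w (md_sched \<sigma>))"
    using exists_md_sched_wval_optimal by blast
  then obtain \<sigma> where \<sigma>: "\<And>i j. \<sigma> i j \<in> Pi\<^sub>E (m_states (pmdp X i j)) (m_act (pmdp X i j))"
    and opt: "\<And>i j \<mu>. valid_sched (pmdp X i j) \<mu> \<Longrightarrow> wval X i j w \<mu> \<le> wval X i j w (md_sched (\<sigma> i j))"
    by metis
  define val where "val g = (\<Sum>j\<in>UNIV. wval X (g j) j w (md_sched (\<sigma> (g j) j)))" for g :: "'n \<Rightarrow> 'n"
  have "Max (val ` {g. bij g}) \<in> val ` {g. bij g}"
    using bij_id by (intro Max_in) auto
  then obtain f where f: "bij f" "val f = Max (val ` {g. bij g})"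
    by auto
  have "assign_vec X (\<lambda>i j. md_sched (\<sigma> i j)) f \<in> alg2 X w"
    unfolding mem_alg2_iff
  proof (intro exI[of _ "\<lambda>i j. md_sched (\<sigma> i j)"] exI[of _ f] conjI allI impI)
    fix g :: "'n \<Rightarrow> 'n"
    assume "bij g"
    then have "val g \<le> val f"
      using f by (simp add: Max_ge)
    then show "(\<Sum>j\<in>UNIV. wval X (g j) j w (md_sched (\<sigma> (g j) j)))
        \<le> (\<Sum>j\<in>UNIV. wval X (f j) j w (md_sched (\<sigma> (f j) j)))"
      by (simp add: val_def)
  qed (use f opt memoryless_det_md_sched finite_mdp.valid_md_sched[OF finite_mdp_pmdp \<sigma>]
      in \<open>auto simp: val_def\<close>)
  then show ?thesis
    by blast
qed

lemma alg2_subset_C0: "alg2 X w \<subseteq> C0 X"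
proof
  fix r
  assume "r \<in> alg2 X w"
  then show "r \<in> C0 X"
    unfolding mem_alg2_iff mem_C0_iff
    by (elim exE conjE, intro exI[of _ "return_pmf _"] exI[of _ "\<lambda>_. _"]) auto
qed

text \<open>Every agent-task scheduler is dominated by the chosen optimal one, and every assignment
  by the optimal assignment; a random assignment only averages over assignments.\<close>
lemma inner_C0_le_alg2:
  assumes w: "\<And>k. 0 \<le> w $ k" and r: "r \<in> alg2 X w" and x: "x \<in> C0 X"
  shows "w \<bullet> x \<le> w \<bullet> r"
proof -
  obtain \<mu> f0 where v\<mu>: "\<And>i j. valid_sched (pmdp X i j) (\<mu> i j)"
    and opt: "\<And>i j \<mu>'. valid_sched (pmdp X i j) \<mu>' \<Longrightarrow> wval X i j w \<mu>' \<le> wval X i j w (\<mu> i j)"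
    and f0: "bij f0"
    and best: "\<And>g. bij g \<Longrightarrow> (\<Sum>j\<in>UNIV. wval X (g j) j w (\<mu> (g j) j)) \<le> (\<Sum>j\<in>UNIV. wval X (f0 j) j w (\<mu> (f0 j) j))"
    and r_eq: "r = assign_vec X \<mu> f0"
    using r unfolding mem_alg2_iff by blast
  obtain p \<sigma> where x_eq: "x = (\<chi> k. measure_pmf.expectation p (\<lambda>f. assign_vec X (\<sigma> f) f $ k))"
    and p: "\<forall>f\<in>set_pmf p. bij f" and v\<sigma>: "\<And>f i j. valid_sched (pmdp X i j) (\<sigma> f i j)"
    using x unfolding mem_C0_iff by blast
  have assign_le: "w \<bullet> assign_vec X (\<sigma> f) f \<le> w \<bullet> r" if "bij f" for f
  proof -
    have "w \<bullet> assign_vec X (\<sigma> f) f = (\<Sum>j\<in>UNIV. wval X (f j) j w (\<sigma> f (f j) j))"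
      by (rule inner_assign_vec[OF that v\<sigma>])
    also have "\<dots> \<le> (\<Sum>j\<in>UNIV. wval X (f j) j w (\<mu> (f j) j))"
      by (intro sum_mono opt v\<sigma>)
    also have "\<dots> \<le> w \<bullet> r"
      unfolding r_eq inner_assign_vec[OF f0 v\<mu>] by (rule best[OF that])
    finally show ?thesis .
  qed
  have "w \<bullet> x = (\<Sum>k\<in>UNIV. \<Sum>f\<in>UNIV. pmf p f * (w $ k * assign_vec X (\<sigma> f) f $ k))"
    unfolding inner_vec_def x_eq
    by (simp add: expectation_pmf_eq_sum[of UNIV] sum_distrib_left mult.left_commute)
  also have "\<dots> = (\<Sum>f\<in>UNIV. pmf p f * (w \<bullet> assign_vec X (\<sigma> f) f))"
    unfolding inner_vec_def by (subst sum.swap) (simp add: sum_distrib_left)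
  also have "\<dots> \<le> (\<Sum>f\<in>UNIV. pmf p f * (w \<bullet> r))"
  proof (rule sum_mono)
    fix f
    show "pmf p f * (w \<bullet> assign_vec X (\<sigma> f) f) \<le> pmf p f * (w \<bullet> r)"
      using p assign_le[of f] by (cases "f \<in> set_pmf p") (auto simp: set_pmf_eq intro: mult_left_mono)
  qed
  also have "\<dots> = w \<bullet> r"
    by (simp add: sum_distrib_right[symmetric] sum_pmf_eq_1)
  finally show ?thesis .
qed

lemma inner_Cset_le_alg2:
  assumes w: "\<And>k. 0 \<le> w $ k" and r: "r \<in> alg2 X w" and c: "c \<in> Cset X"
  shows "w \<bullet> c \<le> w \<bullet> r"
proof -
  obtain x where x: "x \<in> C0 X" "\<And>k. c $ k \<le> x $ k"
    using c unfolding Cset_def by blast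
  have "w \<bullet> c \<le> w \<bullet> x"
    unfolding inner_vec_def inner_real_def by (intro sum_mono mult_left_mono x w)
  also have "\<dots> \<le> w \<bullet> r"
    by (rule inner_C0_le_alg2[OF w r x(1)])
  finally show ?thesis .
qed

lemma assign_vec_mix_sched:
  assumes "0 \<le> c" "c \<le> 1" "\<And>i j. valid_sched (pmdp X i j) (F1 i j)" "\<And>i j. valid_sched (pmdp X i j) (F2 i j)"
  shows "assign_vec X (\<lambda>i j. mix_sched c (F1 i j) (F2 i j)) f $ k = c * assign_vec X F1 f $ k + (1 - c) * assign_vec X F2 f $ k"
  by (cases k) (simp_all add: assign_vec_def exp_rew_mix_sched_pval assms)

text \<open>A convex combination of two randomised assignments draws f from the mixture of the two
  distributions and then mixes the two schedulers for f by the posterior weight of the first.\<close>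
lemma C0_convex_comb:
  assumes x1: "x1 \<in> C0 X" and x2: "x2 \<in> C0 X" and c: "0 \<le> c" "c \<le> 1"
  shows "c *\<^sub>R x1 + (1 - c) *\<^sub>R x2 \<in> C0 X"
proof -
  obtain p1 \<sigma>1 where x1_eq: "x1 = (\<chi> k. measure_pmf.expectation p1 (\<lambda>f. assign_vec X (\<sigma>1 f) f $ k))"
    and p1: "\<forall>f\<in>set_pmf p1. bij f" and v1: "\<And>f i j. valid_sched (pmdp X i j) (\<sigma>1 f i j)"
    using x1 unfolding mem_C0_iff by blast
  obtain p2 \<sigma>2 where x2_eq: "x2 = (\<chi> k. measure_pmf.expectation p2 (\<lambda>f. assign_vec X (\<sigma>2 f) f $ k))"
    and p2: "\<forall>f\<in>set_pmf p2. bij f" and v2: "\<And>f i j. valid_sched (pmdp X i j) (\<sigma>2 f i j)"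
    using x2 unfolding mem_C0_iff by blast
  define p where "p = mix_pmf c p1 p2"
  define post where "post f = posterior c (pmf p1 f) (pmf p2 f)" for f
  define \<sigma> where "\<sigma> f i j = mix_sched (post f) (\<sigma>1 f i j) (\<sigma>2 f i j)" for f i j
  have post: "0 \<le> post f" "post f \<le> 1" for f
    unfolding post_def by (rule posterior_bounds[OF c pmf_nonneg pmf_nonneg])+
  have split: "pmf p f * assign_vec X (\<sigma> f) f $ k
      = c * pmf p1 f * assign_vec X (\<sigma>1 f) f $ k + (1 - c) * pmf p2 f * assign_vec X (\<sigma>2 f) f $ k" for f k
    unfolding \<sigma>_def assign_vec_mix_sched[OF post v1 v2]
    unfolding p_def pmf_mix_pmf[OF c] post_def
    by (rule mult_posterior_comb[OF c pmf_nonneg pmf_nonneg])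
  show ?thesis
    unfolding mem_C0_iff
  proof (intro exI conjI allI)
    show "c *\<^sub>R x1 + (1 - c) *\<^sub>R x2 = (\<chi> k. measure_pmf.expectation p (\<lambda>f. assign_vec X (\<sigma> f) f $ k))"
      unfolding x1_eq x2_eq
      by (simp add: vec_eq_iff expectation_pmf_eq_sum[of UNIV] split sum.distrib sum_distrib_left mult.assoc)
    show "\<forall>f\<in>set_pmf p. bij f"
      using set_pmf_mix_pmf[of c p1 p2] p1 p2 unfolding p_def by blast
    show "valid_sched (pmdp X i j) (\<sigma> f i j)" for f i j
      unfolding \<sigma>_def by (rule finite_mdp.valid_mix_sched[OF finite_mdp_pmdp v1 v2])
  qed
qed

lemma Cset_downward: "c \<in> Cset X \<Longrightarrow> (\<And>k. u $ k \<le> c $ k) \<Longrightarrow> u \<in> Cset X"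
  unfolding Cset_def by (blast intro: order_trans)

lemma convex_Cset: "convex (Cset X)"
proof (rule convexI)
  fix x y :: "real^('n+'n)" and u v :: real
  assume x: "x \<in> Cset X" and y: "y \<in> Cset X" and uv: "0 \<le> u" "0 \<le> v" "u + v = 1"
  obtain x' where x': "x' \<in> C0 X" "\<And>k. x $ k \<le> x' $ k"
    using x unfolding Cset_def by blast
  obtain y' where y': "y' \<in> C0 X" "\<And>k. y $ k \<le> y' $ k"
    using y unfolding Cset_def by blast
  have v: "v = 1 - u"
    using uv by simp
  have "u *\<^sub>R x' + v *\<^sub>R y' \<in> C0 X"
    unfolding v using uv by (intro C0_convex_comb x' y') auto
  moreover have "(u *\<^sub>R x + v *\<^sub>R y) $ k \<le> (u *\<^sub>R x' + v *\<^sub>R y') $ k" for k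
    using x'(2)[of k] y'(2)[of k] uv by (simp add: add_mono mult_left_mono)
  ultimately show "u *\<^sub>R x + v *\<^sub>R y \<in> Cset X"
    unfolding Cset_def by blast
qed

lemma Cset_nonempty: "Cset X \<noteq> {}"
  using alg2_nonempty[of 0] alg2_subset_C0 unfolding Cset_def by blast

definition md_values :: "(real^('n+'n)) set" where
  "md_values = (\<lambda>(\<sigma>, f). assign_vec X (\<lambda>i j. md_sched (\<sigma> i j)) f) `
     ((\<Pi>\<^sub>E i\<in>UNIV. \<Pi>\<^sub>E j\<in>UNIV. Pi\<^sub>E (m_states (pmdp X i j)) (m_act (pmdp X i j))) \<times> UNIV)"

lemma finite_md_values: "finite md_values"
  unfolding md_values_def
  by (intro finite_imageI finite_cartesian_product finite_PiE)
     (auto intro: finite_mdp.finite_St[OF finite_mdp_pmdp] finite_mdp.finite_Act[OF finite_mdp_pmdp])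

lemma alg2_subset_md_values: "alg2 X w \<subseteq> md_values"
proof
  fix r
  assume "r \<in> alg2 X w"
  then obtain \<mu> f where v\<mu>: "\<And>i j. valid_sched (pmdp X i j) (\<mu> i j)" and md: "\<And>i j. memoryless_det (\<mu> i j)"
    and r_eq: "r = assign_vec X \<mu> f"
    unfolding mem_alg2_iff by blast
  obtain S where S: "\<And>i j h. \<mu> i j h = return_pmf (S i j (cur h))"
    using md unfolding memoryless_det_def by metis
  define \<sigma> where "\<sigma> i j = restrict (S i j) (m_states (pmdp X i j))" for i j
  have "S i j s \<in> m_act (pmdp X i j) s" if "s \<in> m_states (pmdp X i j)" for i j s
    using finite_mdp.set_pmf_sched[OF finite_mdp_pmdp v\<mu>[of i j], of "(s, [])"] that by (simp add: S)
  then have \<sigma>: "\<sigma> i j \<in> Pi\<^sub>E (m_states (pmdp X i j)) (m_act (pmdp X i j))" for i j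
    by (simp add: \<sigma>_def)
  have "pval X i j (\<mu> i j) k = pval X i j (md_sched (\<sigma> i j)) k" for i j k
    unfolding pval_def exp_rew_def
    by (subst finite_mdp.exp_rew_n_sched_cong[OF finite_mdp_pmdp v\<mu> finite_mdp.valid_md_sched[OF finite_mdp_pmdp \<sigma>]])
       (auto simp: S md_sched_def \<sigma>_def)
  then have "r = assign_vec X (\<lambda>i j. md_sched (\<sigma> i j)) f"
    unfolding r_eq assign_vec_def by simp
  then show "r \<in> md_values"
    unfolding md_values_def using \<sigma> by force
qed

end

section \<open>Nearest points in the M-norm\<close>

definition nearest :: "real^'k^'k \<Rightarrow> real^'k \<Rightarrow> (real^'k) set \<Rightarrow> real^'k \<Rightarrow> bool" where
  "nearest Mm t A x \<longleftrightarrow> x \<in> A \<and> (\<forall>y\<in>A. normM Mm (t - x) \<le> normM Mm (t - y))"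

lemma normM_zero: "normM Mm 0 = 0"
  by (simp add: normM_def)

lemma norm1_nonneg: "0 \<le> norm1 v"
  unfolding norm1_def by (simp add: sum_nonneg)

lemma norm1_eq_0_iff: "norm1 v = 0 \<longleftrightarrow> v = 0"
  unfolding norm1_def by (simp add: sum_nonneg_eq_0_iff vec_eq_iff)

lemma inner_scaleR_inverse_norm1_le_iff:
  "((1 / norm1 v) *\<^sub>R v) \<bullet> a \<le> ((1 / norm1 v) *\<^sub>R v) \<bullet> b \<longleftrightarrow> v \<bullet> a \<le> v \<bullet> b"
proof (cases "v = 0")
  case False
  then have "0 < norm1 v"
    using norm1_nonneg[of v] norm1_eq_0_iff[of v] by linarith
  then show ?thesis
    by (simp add: divide_le_cancel)
qed simp

locale pos_def =
  fixes Mm :: "real^'k^'k"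
  assumes sym: "transpose Mm = Mm" and pos: "\<forall>v. v \<noteq> 0 \<longrightarrow> v \<bullet> (Mm *v v) > 0"
begin

definition qform :: "real^'k \<Rightarrow> real" where
  "qform v = v \<bullet> (Mm *v v)"

lemma qform_nonneg: "0 \<le> qform v"
  using pos by (cases "v = 0") (auto simp: qform_def less_imp_le)

lemma qform_eq_0_iff: "qform v = 0 \<longleftrightarrow> v = 0"
  using pos by (auto simp: qform_def)

lemma inner_Mm_commute: "u \<bullet> (Mm *v v) = v \<bullet> (Mm *v u)"
proof -
  have "u \<bullet> (Mm *v v) = (u v* Mm) \<bullet> v"
    by (simp add: dot_lmul_matrix)
  also have "\<dots> = (Mm *v u) \<bullet> v"
    by (metis sym transpose_matrix_vector)
  finally show ?thesis
    by (simp add: inner_commute)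
qed

lemma qform_add: "qform (a + b) = qform a + 2 * (a \<bullet> (Mm *v b)) + qform b"
  unfolding qform_def using inner_Mm_commute[of b a]
  by (simp add: matrix_vector_right_distrib inner_add_left inner_add_right)

lemma qform_scaleR: "qform (c *\<^sub>R v) = c\<^sup>2 * qform v"
  unfolding qform_def by (simp add: matrix_vector_mult_scaleR power2_eq_square)

lemma normM_le_iff: "normM Mm a \<le> normM Mm b \<longleftrightarrow> qform a \<le> qform b"
  by (simp add: normM_def qform_def)

lemma normM_nonneg: "0 \<le> normM Mm v"
  using qform_nonneg by (simp add: normM_def qform_def)

lemma continuous_on_qform: "continuous_on S qform"
  unfolding qform_def
  by (intro continuous_on_inner continuous_on_id linear_continuous_on)
     (simp add: linear_linear matrix_vector_mul_linear)

lemma qform_coercive: "\<exists>m>0. \<forall>v. m * (norm v)\<^sup>2 \<le> qform v"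
proof -
  obtain k :: 'k where True
    by simp
  have "axis k (1::real) \<in> sphere 0 1"
    by simp
  then obtain v0 where v0: "v0 \<in> sphere 0 1" "\<And>y. y \<in> sphere 0 1 \<Longrightarrow> qform v0 \<le> qform y"
    using continuous_attains_inf[OF compact_sphere _ continuous_on_qform] by blast
  have "v0 \<noteq> 0"
    using v0(1) by auto
  then have m: "qform v0 > 0"
    using pos by (simp add: qform_def)
  have "qform v0 * (norm v)\<^sup>2 \<le> qform v" for v :: "real^'k"
  proof (cases "v = 0")
    case False
    have "qform v0 \<le> qform ((1 / norm v) *\<^sub>R v)"
      using False by (intro v0(2)) simp
    also have "\<dots> = qform v / (norm v)\<^sup>2"
      by (simp add: qform_scaleR power_divide)
    finally show ?thesis
      using False by (simp add: le_divide_eq)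
  qed (simp add: qform_def)
  then show ?thesis
    using m by blast
qed

lemma exists_nearest:
  assumes "closed A" "A \<noteq> {}"
  shows "\<exists>x. nearest Mm t A x"
proof -
  obtain y0 where y0: "y0 \<in> A"
    using assms by blast
  obtain m where m: "m > 0" "\<And>v. m * (norm v)\<^sup>2 \<le> qform v"
    using qform_coercive by blast
  define A' where "A' = A \<inter> {y. qform (t - y) \<le> qform (t - y0)}"
  have cont: "continuous_on UNIV (\<lambda>y. qform (t - y))"
    by (rule continuous_on_compose2[OF continuous_on_qform]) (auto intro: continuous_intros)
  have "closed A'"
    unfolding A'_def using cont by (intro closed_Int assms(1) closed_Collect_le continuous_on_const) auto
  moreover have "bounded A'"
    unfolding bounded_iff
  proof (intro exI ballI)
    fix y
    assume "y \<in> A'"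
    then have "m * (norm (t - y))\<^sup>2 \<le> qform (t - y0)"
      using m(2)[of "t - y"] by (auto simp: A'_def)
    then have "(norm (t - y))\<^sup>2 \<le> qform (t - y0) / m"
      using m(1) by (simp add: field_simps)
    then have "norm (t - y) \<le> sqrt (qform (t - y0) / m)"
      by (simp add: real_le_rsqrt)
    then show "norm y \<le> norm t + sqrt (qform (t - y0) / m)"
      using norm_triangle_ineq4[of t "t - y"] by simp
  qed
  ultimately have "compact A'"
    by (simp add: compact_eq_bounded_closed)
  moreover have "A' \<noteq> {}"
    using y0 by (auto simp: A'_def)
  ultimately obtain x where x: "x \<in> A'" "\<And>y. y \<in> A' \<Longrightarrow> qform (t - x) \<le> qform (t - y)"
    using continuous_attains_inf[of A' "\<lambda>y. qform (t - y)"] continuous_on_subset[OF cont] by blast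
  have "qform (t - x) \<le> qform (t - y)" if "y \<in> A" for y
    using x that by (cases "y \<in> A'") (auto simp: A'_def)
  then show ?thesis
    using x(1) by (auto simp: nearest_def normM_le_iff A'_def)
qed

lemma nearest_convex_inner_le:
  assumes A: "convex A" and x: "nearest Mm t A x" and y: "y \<in> A"
  shows "(Mm *v (t - x)) \<bullet> y \<le> (Mm *v (t - x)) \<bullet> x"
proof (rule ccontr)
  define d where "d = (Mm *v (t - x)) \<bullet> (y - x)"
  define Q where "Q = qform (y - x)"
  assume "\<not> ?thesis"
  then have d: "d > 0"
    by (simp add: d_def inner_diff_right)
  have Q: "Q \<ge> 0"
    by (simp add: Q_def qform_nonneg)
  have "2 * s * d \<le> s\<^sup>2 * Q" if s: "0 < s" "s \<le> 1" for s
  proof -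
    have "x + s *\<^sub>R (y - x) = (1 - s) *\<^sub>R x + s *\<^sub>R y"
      by (simp add: algebra_simps)
    then have "x + s *\<^sub>R (y - x) \<in> A"
      using convexD_alt[OF A _ y, of x s] x s by (simp add: nearest_def)
    then have "qform (t - x) \<le> qform (t - (x + s *\<^sub>R (y - x)))"
      using x by (simp add: nearest_def normM_le_iff)
    also have "t - (x + s *\<^sub>R (y - x)) = (t - x) + (- s) *\<^sub>R (y - x)"
      by (simp add: algebra_simps)
    also have "qform \<dots> = qform (t - x) + 2 * ((t - x) \<bullet> (Mm *v ((- s) *\<^sub>R (y - x)))) + qform ((- s) *\<^sub>R (y - x))"
      by (rule qform_add)
    also have "\<dots> = qform (t - x) - 2 * s * d + s\<^sup>2 * Q"
      unfolding qform_scaleR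
      by (simp add: matrix_vector_mult_scaleR d_def Q_def inner_Mm_commute[of "t - x"] inner_commute)
    finally show ?thesis
      by simp
  qed
  moreover define s where "s = min 1 (d / (Q + 1))"
  moreover have s: "0 < s" "s \<le> 1"
    using d Q by (auto simp: s_def)
  ultimately have "2 * d \<le> s * Q"
    by (simp add: power2_eq_square mult.assoc)
  also have "\<dots> \<le> d / (Q + 1) * Q"
    using Q s by (intro mult_right_mono) (auto simp: s_def)
  also have "\<dots> < d"
    using d Q by (simp add: field_simps)
  finally show False
    using d by simp
qed

text \<open>Pythagoras: for such z, qform (t - z) \<ge> qform (t - x) + qform (x - z).\<close>
lemma eq_if_nearer_beyond_halfspace:
  assumes "qform (t - z) \<le> qform (t - x)" "(Mm *v (t - x)) \<bullet> z \<le> (Mm *v (t - x)) \<bullet> x"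
  shows "z = x"
proof -
  have "qform (t - z) = qform (t - x) + 2 * ((Mm *v (t - x)) \<bullet> (x - z)) + qform (x - z)"
    using qform_add[of "t - x" "x - z"] by (simp add: inner_Mm_commute[of "t - x"] inner_commute)
  then have "qform (x - z) \<le> 0"
    using assms by (simp add: inner_diff_right)
  then show ?thesis
    using qform_nonneg[of "x - z"] qform_eq_0_iff[of "x - z"] by simp
qed

end

lemma downc_convex: "convex (downc \<Phi>)"
proof (rule convexI)
  fix x y and u v :: real
  assume x: "x \<in> downc \<Phi>" and y: "y \<in> downc \<Phi>" and uv: "0 \<le> u" "0 \<le> v" "u + v = 1"
  obtain x' where x': "x' \<in> convex hull \<Phi>" "\<forall>k. x $ k \<le> x' $ k"
    using x unfolding downc_def by blast
  obtain y' where y': "y' \<in> convex hull \<Phi>" "\<forall>k. y $ k \<le> y' $ k"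
    using y unfolding downc_def by blast
  have "u *\<^sub>R x' + v *\<^sub>R y' \<in> convex hull \<Phi>"
    using convexD[OF convex_convex_hull x'(1) y'(1)] uv by blast
  moreover have "\<forall>k. (u *\<^sub>R x + v *\<^sub>R y) $ k \<le> (u *\<^sub>R x' + v *\<^sub>R y') $ k"
    using x'(2) y'(2) uv by (simp add: add_mono mult_left_mono)
  ultimately show "u *\<^sub>R x + v *\<^sub>R y \<in> downc \<Phi>"
    unfolding downc_def by blast
qed

text \<open>The downward closure is the Minkowski sum of the convex hull and the closed
  nonpositive orthant.\<close>
lemma downc_closed:
  assumes "finite \<Phi>"
  shows "closed (downc (\<Phi> :: (real^'k) set))"
proof -
  let ?N = "{v::real^'k. \<forall>k. v $ k \<le> 0}"
  have "downc \<Phi> = (\<Union>x\<in>convex hull \<Phi>. \<Union>y\<in>?N. {x + y})"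
  proof (intro set_eqI iffI)
    fix u
    assume "u \<in> downc \<Phi>"
    then obtain x where "x \<in> convex hull \<Phi>" "\<forall>k. u $ k \<le> x $ k"
      unfolding downc_def by blast
    then show "u \<in> (\<Union>x\<in>convex hull \<Phi>. \<Union>y\<in>?N. {x + y})"
      by (intro UN_I[of x] UN_I[of "u - x"]) auto
  next
    fix u
    assume "u \<in> (\<Union>x\<in>convex hull \<Phi>. \<Union>y\<in>?N. {x + y})"
    then show "u \<in> downc \<Phi>"
      unfolding downc_def by force
  qed
  moreover have "?N = (\<Inter>k. {v. axis k 1 \<bullet> v \<le> 0})"
    by (auto simp: inner_axis inner_commute)
  then have "closed ?N"
    by (simp add: closed_INT closed_halfspace_le)
  ultimately show ?thesis
    using compact_closed_sums[OF finite_imp_compact_convex_hull[OF assms]] by simp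
qed

lemma subset_downc: "\<Phi> \<subseteq> downc \<Phi>"
  unfolding downc_def by (auto intro: hull_inc)

lemma downc_mono: "\<Phi> \<subseteq> \<Psi> \<Longrightarrow> downc \<Phi> \<subseteq> downc \<Psi>"
  unfolding downc_def using hull_mono[of \<Phi> \<Psi> convex] by blast

lemma downc_diff_axis:
  assumes "x \<in> downc \<Phi>"
  shows "x - axis k 1 \<in> downc \<Phi>"
proof -
  obtain x' where x': "x' \<in> convex hull \<Phi>" "\<forall>j. x $ j \<le> x' $ j"
    using assms unfolding downc_def by blast
  have "(x - axis k 1) $ j \<le> x' $ j" for j
    using x'(2)[rule_format, of j] by (cases "j = k") (auto simp: axis_def)
  then show ?thesis
    using x'(1) unfolding downc_def by blast
qed

definition halfspace_inter :: "((real^'k) \<times> (real^'k)) set \<Rightarrow> (real^'k) set" where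
  "halfspace_inter L = {z. \<forall>(w, r)\<in>L. w \<bullet> z \<le> w \<bullet> r}"

lemma halfspace_inter_insert: "halfspace_inter (insert (w, r) L) = halfspace_inter L \<inter> {z. w \<bullet> z \<le> w \<bullet> r}"
  unfolding halfspace_inter_def by auto

lemma closed_halfspace_inter: "closed (halfspace_inter L)"
proof -
  have "halfspace_inter L = (\<Inter>p\<in>L. {z. fst p \<bullet> z \<le> fst p \<bullet> snd p})"
    unfolding halfspace_inter_def by (auto simp: case_prod_beta)
  then show ?thesis
    by (simp add: closed_INT closed_halfspace_le)
qed

context pos_def
begin

lemma nearest_downc_weight_nonneg:
  assumes "nearest Mm t (downc \<Phi>) x"
  shows "0 \<le> ((1 / norm1 (Mm *v (t - x))) *\<^sub>R (Mm *v (t - x))) $ k"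
proof -
  have "x - axis k 1 \<in> downc \<Phi>"
    using assms downc_diff_axis by (auto simp: nearest_def)
  then have "(Mm *v (t - x)) \<bullet> (x - axis k 1) \<le> (Mm *v (t - x)) \<bullet> x"
    by (rule nearest_convex_inner_le[OF downc_convex assms])
  then have "0 \<le> (Mm *v (t - x)) $ k"
    by (simp add: inner_diff_right inner_axis)
  then show ?thesis
    by (simp add: divide_nonneg_nonneg norm1_nonneg)
qed

end

section \<open>Algorithm 1\<close>

locale alg1_setting = task_alloc X + pos_def Mm
  for X :: "('n::finite,'s,'a,'q,'l) inst" and Mm :: "real^('n+'n)^('n+'n)" +
  fixes t :: "real^('n+'n)" and eps :: real and i0 :: 'n
  assumes eps_nonneg: "eps \<ge> 0"
begin

lemma alg1_stepE:
  assumes "alg1_step X Mm t eps S S'"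
  obtains w r z where "alg1_guard Mm eps S" "r \<in> alg2 X w"
    and "phi S = {} \<Longrightarrow> tup S' = tup S \<and> w = wt S"
    and "phi S \<noteq> {} \<Longrightarrow> \<exists>x. tup S' = Some x \<and> nearest Mm t (downc (phi S)) x \<and>
           w = (1 / norm1 (Mm *v (t - x))) *\<^sub>R (Mm *v (t - x))"
    and "w \<bullet> r < w \<bullet> tdown S \<Longrightarrow> nearest Mm t (halfspace_inter (insert (w, r) (lam S))) z"
    and "\<not> w \<bullet> r < w \<bullet> tdown S \<Longrightarrow> z = tdown S"
    and "tdown S' = z" "phi S' = insert r (phi S)" "lam S' = insert (w, r) (lam S)" "wt S' = w"
proof -
  obtain u w r z where guard: "alg1_guard Mm eps S"
    and U: "if phi S = {} then u = tup S \<and> w = wt S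
        else (\<exists>x. x \<in> downc (phi S) \<and> (\<forall>y\<in>downc (phi S). normM Mm (t - x) \<le> normM Mm (t - y)) \<and>
                  u = Some x \<and> w = (1 / norm1 (Mm *v (t - x))) *\<^sub>R (Mm *v (t - x)))"
    and r: "r \<in> alg2 X w"
    and Z: "if w \<bullet> r < w \<bullet> tdown S
        then (\<forall>(w',r')\<in>insert (w,r) (lam S). w' \<bullet> z \<le> w' \<bullet> r') \<and>
             (\<forall>z'. (\<forall>(w',r')\<in>insert (w,r) (lam S). w' \<bullet> z' \<le> w' \<bullet> r') \<longrightarrow>
                   normM Mm (t - z) \<le> normM Mm (t - z'))
        else z = tdown S"
    and S': "S' = \<lparr> tup = u, tdown = z, phi = insert r (phi S), lam = insert (w,r) (lam S), wt = w \<rparr>"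
    using assms unfolding alg1_step_def by blast
  show thesis
    by (rule that[of r w z])
       (use guard U r Z in \<open>auto simp: S' nearest_def halfspace_inter_def split: if_splits\<close>)
qed

definition alg1_inv :: "('n+'n) astate \<Rightarrow> bool" where
  "alg1_inv S \<longleftrightarrow> phi S \<subseteq> md_values \<inter> Cset X
     \<and> (\<forall>(w, r)\<in>lam S. (\<forall>k. 0 \<le> w $ k) \<and> r \<in> alg2 X w)
     \<and> nearest Mm t (halfspace_inter (lam S)) (tdown S)
     \<and> (\<forall>u. tup S = Some u \<longrightarrow> u \<in> downc (phi S))
     \<and> (phi S = {} \<longrightarrow> tup S = None \<and> (\<forall>k. 0 \<le> wt S $ k))"

lemma alg1_invD:
  assumes "alg1_inv S"
  shows "phi S \<subseteq> md_values" "phi S \<subseteq> Cset X"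
    and "(w, r) \<in> lam S \<Longrightarrow> 0 \<le> w $ k" "(w, r) \<in> lam S \<Longrightarrow> r \<in> alg2 X w"
    and "nearest Mm t (halfspace_inter (lam S)) (tdown S)"
    and "tup S = Some u \<Longrightarrow> u \<in> downc (phi S)"
    and "phi S = {} \<Longrightarrow> tup S = None" "phi S = {} \<Longrightarrow> 0 \<le> wt S $ k"
  using assms unfolding alg1_inv_def by auto

lemma Cset_subset_halfspace_inter:
  assumes "alg1_inv S"
  shows "Cset X \<subseteq> halfspace_inter (lam S)"
proof
  fix c
  assume "c \<in> Cset X"
  then have "w \<bullet> c \<le> w \<bullet> r" if "(w, r) \<in> lam S" for w r
    using inner_Cset_le_alg2 alg1_invD(3,4)[OF assms that] by blast
  then show "c \<in> halfspace_inter (lam S)"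
    unfolding halfspace_inter_def by auto
qed

lemma downc_subset_Cset:
  assumes "\<Phi> \<subseteq> Cset X"
  shows "downc \<Phi> \<subseteq> Cset X"
proof
  fix u
  assume "u \<in> downc \<Phi>"
  then obtain x where x: "x \<in> convex hull \<Phi>" "\<forall>k. u $ k \<le> x $ k"
    unfolding downc_def by blast
  have "convex hull \<Phi> \<subseteq> Cset X"
    by (rule hull_minimal[of \<Phi> "Cset X" convex, OF assms convex_Cset])
  then show "u \<in> Cset X"
    using x Cset_downward by blast
qed

lemma tup_in_Cset: "alg1_inv S \<Longrightarrow> tup S = Some u \<Longrightarrow> u \<in> Cset X"
  using downc_subset_Cset[OF alg1_invD(2)] alg1_invD(6) by blast

lemma tdown_nearest_Cset:
  assumes "alg1_inv S" "u \<in> Cset X"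
  shows "normM Mm (t - tdown S) \<le> normM Mm (t - u)"
  using alg1_invD(5)[OF assms(1)] Cset_subset_halfspace_inter[OF assms(1)] assms(2)
  unfolding nearest_def by blast

lemma tdown_eq_if_feasible:
  assumes "alg1_inv S" "t \<in> Cset X"
  shows "tdown S = t"
proof -
  have "qform (t - tdown S) \<le> 0"
    using tdown_nearest_Cset[OF assms] by (simp add: normM_le_iff qform_def)
  then show ?thesis
    using qform_nonneg[of "t - tdown S"] qform_eq_0_iff[of "t - tdown S"] by simp
qed

lemma alg1_inv_init: "alg1_inv (alg1_init i0 t)"
  unfolding alg1_inv_def alg1_init_def nearest_def halfspace_inter_def by (simp add: normM_nonneg normM_zero)

lemma weight_nonneg_if_step:
  assumes "alg1_inv S" "phi S = {} \<Longrightarrow> tup S' = tup S \<and> w = wt S"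
    and "phi S \<noteq> {} \<Longrightarrow> \<exists>x. tup S' = Some x \<and> nearest Mm t (downc (phi S)) x \<and>
           w = (1 / norm1 (Mm *v (t - x))) *\<^sub>R (Mm *v (t - x))"
  shows "0 \<le> w $ k"
proof (cases "phi S = {}")
  case True
  then show ?thesis
    using assms(2) alg1_invD(8)[OF assms(1)] by simp
next
  case False
  then show ?thesis
    using assms(3) nearest_downc_weight_nonneg by blast
qed

lemma alg1_inv_step:
  assumes inv: "alg1_inv S" and step: "alg1_step X Mm t eps S S'"
  shows "alg1_inv S'"
  using step
proof (rule alg1_stepE)
  fix w r z
  assume U1: "phi S = {} \<Longrightarrow> tup S' = tup S \<and> w = wt S"
    and U2: "phi S \<noteq> {} \<Longrightarrow> \<exists>x. tup S' = Some x \<and> nearest Mm t (downc (phi S)) x \<and>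
           w = (1 / norm1 (Mm *v (t - x))) *\<^sub>R (Mm *v (t - x))"
    and r: "r \<in> alg2 X w"
    and Z1: "w \<bullet> r < w \<bullet> tdown S \<Longrightarrow> nearest Mm t (halfspace_inter (insert (w, r) (lam S))) z"
    and Z2: "\<not> w \<bullet> r < w \<bullet> tdown S \<Longrightarrow> z = tdown S"
    and S': "tdown S' = z" "phi S' = insert r (phi S)" "lam S' = insert (w, r) (lam S)"
  have w: "\<forall>k. 0 \<le> w $ k"
    using weight_nonneg_if_step[OF inv U1 U2] by blast
  have "r \<in> md_values" "r \<in> Cset X"
    using alg2_subset_md_values alg2_subset_C0 r unfolding Cset_def by blast+
  then have "phi S' \<subseteq> md_values \<inter> Cset X"
    using alg1_invD(1,2)[OF inv] unfolding S'(2) by blast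
  moreover have "\<forall>(w', r')\<in>lam S'. (\<forall>k. 0 \<le> w' $ k) \<and> r' \<in> alg2 X w'"
    using alg1_invD(3,4)[OF inv] w r unfolding S'(3) by auto
  moreover have "nearest Mm t (halfspace_inter (lam S')) (tdown S')"
  proof (cases "w \<bullet> r < w \<bullet> tdown S")
    case False
    then show ?thesis
      using Z2 alg1_invD(5)[OF inv] unfolding S' halfspace_inter_insert nearest_def by auto
  qed (use Z1 S' in simp)
  moreover have "tup S' = Some u \<Longrightarrow> u \<in> downc (phi S')" for u
  proof -
    assume "tup S' = Some u"
    then have "u \<in> downc (phi S)"
      using U1 U2 alg1_invD(6)[OF inv] by (cases "phi S = {}") (auto simp: nearest_def)
    then show ?thesis
      using downc_mono[of "phi S" "phi S'"] S'(2) by blast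
  qed
  ultimately show ?thesis
    using S'(2) unfolding alg1_inv_def by blast
qed

lemma alg1_inv_reachable: "(alg1_step X Mm t eps)\<^sup>*\<^sup>* (alg1_init i0 t) S \<Longrightarrow> alg1_inv S"
  by (induction rule: rtranclp_induct) (auto intro: alg1_inv_init alg1_inv_step)

lemma alg1_stepI:
  assumes "alg1_guard Mm eps S" "r \<in> alg2 X w"
    and "phi S = {} \<Longrightarrow> u = tup S \<and> w = wt S"
    and "phi S \<noteq> {} \<Longrightarrow> \<exists>x. u = Some x \<and> nearest Mm t (downc (phi S)) x \<and>
           w = (1 / norm1 (Mm *v (t - x))) *\<^sub>R (Mm *v (t - x))"
    and "w \<bullet> r < w \<bullet> tdown S \<Longrightarrow> nearest Mm t (halfspace_inter (insert (w, r) (lam S))) z"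
    and "\<not> w \<bullet> r < w \<bullet> tdown S \<Longrightarrow> z = tdown S"
  shows "alg1_step X Mm t eps S \<lparr>tup = u, tdown = z, phi = insert r (phi S), lam = insert (w, r) (lam S), wt = w\<rparr>"
  unfolding alg1_step_def
  by (intro conjI[OF assms(1)] exI[of _ u] exI[of _ w] exI[of _ r] exI[of _ z] conjI refl assms(2))
     (use assms(3-6) in \<open>auto simp: nearest_def halfspace_inter_def\<close>)

lemma alg1_step_exists:
  assumes inv: "alg1_inv S" and guard: "alg1_guard Mm eps S"
  shows "\<exists>S'. alg1_step X Mm t eps S S'"
proof -
  obtain u w where U1: "phi S = {} \<Longrightarrow> u = tup S \<and> w = wt S"
    and U2: "phi S \<noteq> {} \<Longrightarrow> \<exists>x. u = Some x \<and> nearest Mm t (downc (phi S)) x \<and>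
           w = (1 / norm1 (Mm *v (t - x))) *\<^sub>R (Mm *v (t - x))"
    and w: "\<And>k. 0 \<le> w $ k"
  proof (cases "phi S = {}")
    case False
    have "closed (downc (phi S))" "downc (phi S) \<noteq> {}"
      using finite_subset[OF alg1_invD(1)[OF inv] finite_md_values] False subset_downc[of "phi S"]
      by (auto intro: downc_closed)
    then obtain x where x: "nearest Mm t (downc (phi S)) x"
      using exists_nearest by blast
    show ?thesis
      using False nearest_downc_weight_nonneg[OF x]
      by (intro that[of "Some x" "(1 / norm1 (Mm *v (t - x))) *\<^sub>R (Mm *v (t - x))"]) (use x in auto)
  qed (use that[of "tup S" "wt S"] alg1_invD(8)[OF inv] in simp)
  obtain r where r: "r \<in> alg2 X w"
    using alg2_nonempty by blast
  obtain z where Z1: "w \<bullet> r < w \<bullet> tdown S \<Longrightarrow> nearest Mm t (halfspace_inter (insert (w, r) (lam S))) z"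
    and Z2: "\<not> w \<bullet> r < w \<bullet> tdown S \<Longrightarrow> z = tdown S"
  proof (cases "w \<bullet> r < w \<bullet> tdown S")
    case True
    obtain c where "c \<in> Cset X"
      using Cset_nonempty by blast
    then have "c \<in> halfspace_inter (insert (w, r) (lam S))"
      using Cset_subset_halfspace_inter[OF inv] inner_Cset_le_alg2[OF w r]
      unfolding halfspace_inter_insert by blast
    then obtain z where "nearest Mm t (halfspace_inter (insert (w, r) (lam S))) z"
      using exists_nearest[OF closed_halfspace_inter] by blast
    then show ?thesis
      using that True by blast
  qed (use that in blast)
  show ?thesis
    using alg1_stepI[OF guard r U1 U2 Z1 Z2] by blast
qed

text \<open>Let x be the nearest point of down(\<Phi>). A point r of \<Phi> satisfies w \<bullet> r \<le> w \<bullet> x by the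
  optimality of x, and w \<bullet> x \<le> w \<bullet> r by the optimality of r over C; so the new lower point
  lies in the half-space w \<bullet> z \<le> w \<bullet> x and, being no farther from t than x, equals x.\<close>
lemma alg1_step_no_new_point:
  assumes inv: "alg1_inv S" and ne: "phi S \<noteq> {}" and step: "alg1_step X Mm t eps S S'"
    and same: "phi S' = phi S"
  shows "tup S' = Some (tdown S')"
  using step
proof (rule alg1_stepE)
  fix w r z
  assume U: "phi S \<noteq> {} \<Longrightarrow> \<exists>x. tup S' = Some x \<and> nearest Mm t (downc (phi S)) x \<and>
           w = (1 / norm1 (Mm *v (t - x))) *\<^sub>R (Mm *v (t - x))"
    and r: "r \<in> alg2 X w" and Z1: "w \<bullet> r < w \<bullet> tdown S \<Longrightarrow> nearest Mm t (halfspace_inter (insert (w, r) (lam S))) z"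
    and Z2: "\<not> w \<bullet> r < w \<bullet> tdown S \<Longrightarrow> z = tdown S"
    and S': "tdown S' = z" "phi S' = insert r (phi S)"
  obtain x where tup: "tup S' = Some x" and x: "nearest Mm t (downc (phi S)) x"
    and w_def: "w = (1 / norm1 (Mm *v (t - x))) *\<^sub>R (Mm *v (t - x))"
    using U ne by blast
  have "r \<in> downc (phi S)"
    using same S'(2) subset_downc by blast
  then have "(Mm *v (t - x)) \<bullet> r \<le> (Mm *v (t - x)) \<bullet> x"
    by (rule nearest_convex_inner_le[OF downc_convex x])
  then have wr_le_wx: "w \<bullet> r \<le> w \<bullet> x"
    unfolding w_def inner_scaleR_inverse_norm1_le_iff .
  have x_C: "x \<in> Cset X"
    using x downc_subset_Cset[OF alg1_invD(2)[OF inv]] unfolding nearest_def by blast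
  have "w \<bullet> x \<le> w \<bullet> r"
    using inner_Cset_le_alg2[OF _ r x_C] nearest_downc_weight_nonneg[OF x] unfolding w_def by blast
  then have x_in: "x \<in> halfspace_inter (insert (w, r) (lam S))"
    using Cset_subset_halfspace_inter[OF inv] x_C unfolding halfspace_inter_insert by blast
  have "qform (t - z) \<le> qform (t - x) \<and> w \<bullet> z \<le> w \<bullet> r"
  proof (cases "w \<bullet> r < w \<bullet> tdown S")
    case True
    then show ?thesis
      using Z1 x_in by (auto simp: nearest_def normM_le_iff halfspace_inter_insert)
  next
    case False
    then show ?thesis
      using Z2 x_in alg1_invD(5)[OF inv] by (auto simp: nearest_def normM_le_iff halfspace_inter_insert)
  qed
  then have "qform (t - z) \<le> qform (t - x)" "(Mm *v (t - x)) \<bullet> z \<le> (Mm *v (t - x)) \<bullet> x"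
    using wr_le_wx unfolding w_def inner_scaleR_inverse_norm1_le_iff by auto
  then have "z = x"
    by (rule eq_if_nearer_beyond_halfspace)
  then show ?thesis
    using tup S'(1) by simp
qed

lemma alg1_step_phi_grows:
  assumes inv: "alg1_inv S" and ne: "phi S \<noteq> {}" and step: "alg1_step X Mm t eps S S'"
    and guard': "alg1_guard Mm eps S'"
  shows "phi S \<subset> phi S'"
proof -
  have "phi S \<subseteq> phi S'"
    using step by (rule alg1_stepE) auto
  moreover have "phi S' \<noteq> phi S"
    using alg1_step_no_new_point[OF inv ne step] guard' eps_nonneg
    by (auto simp: alg1_guard_def normM_zero)
  ultimately show ?thesis
    by blast
qed

lemma alg1_no_infinite_run: "\<nexists>S. S 0 = alg1_init i0 t \<and> (\<forall>n. alg1_step X Mm t eps (S n) (S (Suc n)))"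
proof
  assume "\<exists>S. S 0 = alg1_init i0 t \<and> (\<forall>n. alg1_step X Mm t eps (S n) (S (Suc n)))"
  then obtain S where S0: "S 0 = alg1_init i0 t" and step: "\<And>n. alg1_step X Mm t eps (S n) (S (Suc n))"
    by blast
  have inv: "alg1_inv (S n)" for n
  proof (induction n)
    case 0
    then show ?case
      unfolding S0 by (rule alg1_inv_init)
  qed (rule alg1_inv_step[OF _ step])
  have fin: "finite (phi (S n))" for n
    using finite_subset[OF alg1_invD(1)[OF inv] finite_md_values] .
  have ne: "phi (S (Suc n)) \<noteq> {}" for n
    using step[of n] by (rule alg1_stepE) simp
  have guard: "alg1_guard Mm eps (S n)" for n
    using step[of n] by (rule alg1_stepE)
  have "Suc n \<le> card (phi (S (Suc n)))" for n
  proof (induction n)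
    case 0
    show ?case
      using ne[of 0] fin[of 1] by (simp add: Suc_le_eq card_gt_0_iff)
  next
    case (Suc n)
    have "phi (S (Suc n)) \<subset> phi (S (Suc (Suc n)))"
      by (rule alg1_step_phi_grows[OF inv ne step guard])
    then have "card (phi (S (Suc n))) < card (phi (S (Suc (Suc n))))"
      by (rule psubset_card_mono[OF fin])
    then show ?case
      using Suc.IH by simp
  qed
  moreover have "card (phi (S n)) \<le> card md_values" for n
    by (rule card_mono[OF finite_md_values alg1_invD(1)[OF inv]])
  ultimately have "Suc (card md_values) \<le> card md_values"
    by (rule order_trans)
  then show False
    by simp
qed

end

context alg1_setting
begin

lemma alg1_reachable_props:
  assumes "(alg1_step X Mm t eps)\<^sup>*\<^sup>* (alg1_init i0 t) S"
  shows "(alg1_guard Mm eps S \<longrightarrow> (\<exists>S'. alg1_step X Mm t eps S S')) \<and>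
        (case tup S of None \<Rightarrow> True | Some u \<Rightarrow> u \<in> Cset X) \<and>
        (t \<in> Cset X \<longrightarrow> tdown S = t) \<and>
        normM Mm (t - tdown S) \<le> (INF u\<in>Cset X. normM Mm (t - u)) \<and>
        (case tup S of None \<Rightarrow> True
           | Some u \<Rightarrow> (INF v\<in>Cset X. normM Mm (t - v)) \<le> normM Mm (t - u))"
proof -
  have inv: "alg1_inv S"
    by (rule alg1_inv_reachable[OF assms])
  have bdd: "bdd_below ((\<lambda>u. normM Mm (t - u)) ` Cset X)"
    by (rule bdd_belowI[of _ 0]) (auto simp: normM_nonneg)
  show ?thesis
  proof (intro conjI impI)
    show "\<exists>S'. alg1_step X Mm t eps S S'" if "alg1_guard Mm eps S"
      by (rule alg1_step_exists[OF inv that])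
    show "case tup S of None \<Rightarrow> True | Some u \<Rightarrow> u \<in> Cset X"
      using tup_in_Cset[OF inv] by (cases "tup S") auto
    show "tdown S = t" if "t \<in> Cset X"
      by (rule tdown_eq_if_feasible[OF inv that])
    show "normM Mm (t - tdown S) \<le> (INF u\<in>Cset X. normM Mm (t - u))"
      by (rule cINF_greatest[OF Cset_nonempty tdown_nearest_Cset[OF inv]])
    show "case tup S of None \<Rightarrow> True | Some u \<Rightarrow> (INF v\<in>Cset X. normM Mm (t - v)) \<le> normM Mm (t - u)"
      using tup_in_Cset[OF inv] by (cases "tup S") (auto intro: cINF_lower[OF bdd])
  qed
qed

end

theorem theorem3:
  fixes X :: "('n::finite,'s,'a,'q,'l) inst"
    and Mm :: "real^('n+'n)^('n+'n)"
    and t :: "real^('n+'n)"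
    and eps :: real
    and i0 :: 'n
  assumes agents_wf: "\<forall>i. wf_mdp (ag X i)"
    and tasks_wf: "\<forall>j. wf_dfa (task X j)"
    and reward_finite: "\<forall>i j \<mu>. valid_sched (pmdp X i j) \<mu> \<longrightarrow>
          convergent (\<lambda>n. exp_rew_n (pmdp X i j) (prew X i j (Inl i)) (pdone X j) \<mu> n
                              (m_init (pmdp X i j), []))"
    and M_sym: "transpose Mm = Mm"
    and M_posdef: "\<forall>v. v \<noteq> 0 \<longrightarrow> v \<bullet> (Mm *v v) > 0"
    and eps_nonneg: "eps \<ge> 0"
  shows "(\<nexists>S. S 0 = alg1_init i0 t \<and> (\<forall>n. alg1_step X Mm t eps (S n) (S (Suc n)))) \<and>
    (\<forall>S. (alg1_step X Mm t eps)\<^sup>*\<^sup>* (alg1_init i0 t) S \<longrightarrow>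
        (alg1_guard Mm eps S \<longrightarrow> (\<exists>S'. alg1_step X Mm t eps S S')) \<and>
        (case tup S of None \<Rightarrow> True | Some u \<Rightarrow> u \<in> Cset X) \<and>
        (t \<in> Cset X \<longrightarrow> tdown S = t) \<and>
        normM Mm (t - tdown S) \<le> (INF u\<in>Cset X. normM Mm (t - u)) \<and>
        (case tup S of None \<Rightarrow> True
           | Some u \<Rightarrow> (INF v\<in>Cset X. normM Mm (t - v)) \<le> normM Mm (t - u)))"
proof -
  interpret alg1_setting X Mm t eps i0
    by unfold_locales (use assms in auto)
  show ?thesis
    using alg1_no_infinite_run alg1_reachable_props by blast
qed

end
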